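(* Let $X$ be a finite-dimensional real Banach space and $Y$ a uniformly convex real Banach space such that $\mathrm{NA}(\mathcal F(X),Y)$ is dense in $\mathcal L(\mathcal F(X),Y)$. Then $\mathrm{DA}(X,Y)$ is dense in $\mathrm{Lip}_0(X,Y)$.
   Context: $\widetilde X=\{(x,y)\in X^2:x\neq y\}$. $\mathrm{Lip}_0(X,Y)$ is the Banach space of Lipschitz $f\colon X\to Y$ with $f(0)=0$ and norm $\|f\|=\sup_{(x,y)\in\widetilde X}\|f(x)-f(y)\|/\|x-y\|$. The Lipschitz-free space $\mathcal F(X)$ is the closed linear span of $\{\delta_x:x\in X\}$ in $\mathrm{Lip}_0(X,\mathbb R)^*$, $\delta_x(g)=g(x)$. $\mathcal L(Z,Y)$ is the space of bounded linear operators, and $\mathrm{NA}(Z,Y)$ the set of $T\in\mathcal L(Z,Y)$ with $\|Tz\|=\|T\|$ for some $z\in S_Z$. $\mathrm{DA}(X,Y)$ is the set of $f\in\mathrm{Lip}_0(X,Y)$ for which there exist $u\in S_X$, $z\in Y$ with $\|z\|=\|f\|$, and $(x_n,y_n)\in\widetilde X$ with $\frac{f(x_n)-f(y_n)}{\|x_n-y_n\|}\to z$ and $\frac{x_n-y_n}{\|x_n-y_n\|}\to u$. *)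

theory Defs
  imports "HOL-Analysis.Analysis"
begin

definition lip_norm :: "('a::real_normed_vector \<Rightarrow> 'c::real_normed_vector) \<Rightarrow> real" where
  "lip_norm f = (SUP p \<in> {(x, y). x \<noteq> y}. norm (f (fst p) - f (snd p)) / norm (fst p - snd p))"

definition Lip0 :: "('a::real_normed_vector \<Rightarrow> 'c::real_normed_vector) set" where
  "Lip0 = {f. f 0 = 0 \<and> (\<exists>C. C-lipschitz_on UNIV f)}"

definition dual_norm :: "(('a::real_normed_vector \<Rightarrow> real) \<Rightarrow> real) \<Rightarrow> real" where
  "dual_norm \<phi> = (SUP g \<in> {g \<in> (Lip0 :: ('a \<Rightarrow> real) set). lip_norm g \<le> 1}. \<bar>\<phi> g\<bar>)"

text \<open>Lip_0(X,R)^*: bounded linear functionals on Lip_0(X,R), represented extensionally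
  (value 0 outside Lip_0(X,R)).\<close>
definition Lip0_dual :: "(('a::real_normed_vector \<Rightarrow> real) \<Rightarrow> real) set" where
  "Lip0_dual = {\<phi>.
     (\<forall>g\<in>Lip0. \<forall>h\<in>Lip0. \<phi> (\<lambda>x. g x + h x) = \<phi> g + \<phi> h) \<and>
     (\<forall>c. \<forall>g\<in>Lip0. \<phi> (\<lambda>x. c * g x) = c * \<phi> g) \<and>
     (\<forall>g. g \<notin> Lip0 \<longrightarrow> \<phi> g = 0) \<and>
     (\<exists>K. \<forall>g\<in>Lip0. \<bar>\<phi> g\<bar> \<le> K * lip_norm g)}"

definition delta :: "'a::real_normed_vector \<Rightarrow> ('a \<Rightarrow> real) \<Rightarrow> real" where
  "delta x = (\<lambda>g. if g \<in> Lip0 then g x else 0)"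

definition delta_span :: "(('a::real_normed_vector \<Rightarrow> real) \<Rightarrow> real) set" where
  "delta_span = {\<phi>. \<exists>S c. finite S \<and> \<phi> = (\<lambda>g. \<Sum>x\<in>S. c x * delta x g)}"

definition free_space :: "(('a::real_normed_vector \<Rightarrow> real) \<Rightarrow> real) set" where
  "free_space = {\<phi> \<in> Lip0_dual.
      \<forall>\<epsilon>>0. \<exists>\<psi>\<in>delta_span. dual_norm (\<lambda>g. \<phi> g - \<psi> g) < \<epsilon>}"

text \<open>L(F(X),Y): bounded linear operators F(X) \<rightarrow> Y (only values on F(X) matter).\<close>
definition bounded_ops :: "((('a::real_normed_vector \<Rightarrow> real) \<Rightarrow> real) \<Rightarrow> 'b::real_normed_vector) set" where
  "bounded_ops = {T.
     (\<forall>\<phi>\<in>(free_space::(('a \<Rightarrow> real) \<Rightarrow> real) set). \<forall>\<psi>\<in>free_space.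
         T (\<lambda>g. \<phi> g + \<psi> g) = T \<phi> + T \<psi>) \<and>
     (\<forall>c. \<forall>\<phi>\<in>(free_space::(('a \<Rightarrow> real) \<Rightarrow> real) set). T (\<lambda>g. c * \<phi> g) = c *\<^sub>R T \<phi>) \<and>
     (\<exists>K. \<forall>\<phi>\<in>(free_space::(('a \<Rightarrow> real) \<Rightarrow> real) set). norm (T \<phi>) \<le> K * dual_norm \<phi>)}"

definition op_norm :: "((('a::real_normed_vector \<Rightarrow> real) \<Rightarrow> real) \<Rightarrow> 'b::real_normed_vector) \<Rightarrow> real" where
  "op_norm T = (SUP \<phi> \<in> {\<phi> \<in> (free_space::(('a \<Rightarrow> real) \<Rightarrow> real) set). dual_norm \<phi> \<le> 1}. norm (T \<phi>))"

definition norm_attaining :: "((('a::real_normed_vector \<Rightarrow> real) \<Rightarrow> real) \<Rightarrow> 'b::real_normed_vector) set" where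
  "norm_attaining = {T \<in> bounded_ops.
     \<exists>\<phi>\<in>(free_space::(('a \<Rightarrow> real) \<Rightarrow> real) set). dual_norm \<phi> = 1 \<and> norm (T \<phi>) = op_norm T}"

definition DA :: "('a::real_normed_vector \<Rightarrow> 'b::real_normed_vector) set" where
  "DA = {f \<in> Lip0. \<exists>u z xs ys. norm u = 1 \<and> norm z = lip_norm f \<and> (\<forall>n. xs n \<noteq> ys n) \<and>
      ((\<lambda>n. (1 / norm (xs n - ys n)) *\<^sub>R (f (xs n) - f (ys n))) \<longlonglongrightarrow> z) \<and>
      ((\<lambda>n. (1 / norm (xs n - ys n)) *\<^sub>R (xs n - ys n)) \<longlonglongrightarrow> u)}"

definition uniformly_convex :: "'b::real_normed_vector itself \<Rightarrow> bool" where
  "uniformly_convex _ \<longleftrightarrow> (\<forall>\<epsilon>>0. \<exists>\<delta>>0. \<forall>x y::'b. norm x = 1 \<longrightarrow> norm y = 1 \<longrightarrow>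
      norm (x - y) \<ge> \<epsilon> \<longrightarrow> norm ((1/2) *\<^sub>R (x + y)) \<le> 1 - \<delta>)"

end

theory Submission
  imports Defs
begin

text \<open>
  A Lipschitz map \<open>f \<in> Lip\<^sub>0(X,Y)\<close> linearizes to an operator \<open>T\<^sub>f : F(X) \<rightarrow> Y\<close> with
  \<open>T\<^sub>f \<delta>\<^sub>x = f x\<close>: the estimate \<open>\<parallel>\<Sum> c\<^sub>x f x\<parallel> \<le> Lip f \<cdot> \<parallel>\<Sum> c\<^sub>x \<delta>\<^sub>x\<parallel>\<close> follows by testing
  against a norming functional on a finite-dimensional subspace of \<open>Y\<close> (Hahn-Banach) and
  extending the resulting real Lipschitz function from finitely many points (McShane).
  Approximate \<open>T\<^sub>f\<close> by an operator \<open>S\<close> attaining its norm at some \<open>\<phi>\<close>; then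
  \<open>x \<mapsto> S \<delta>\<^sub>x\<close> is Lipschitz-close to \<open>f\<close>. Since \<open>\<phi>\<close> is a limit of finite combinations of
  deltas, the same two tools show that difference quotients \<open>q\<close> of \<open>S \<circ> \<delta>\<close> exist with
  \<open>\<parallel>q + S \<phi>\<parallel>\<close> arbitrarily close to \<open>2\<parallel>S\<parallel>\<close>. Uniform convexity of \<open>Y\<close> makes these
  quotients converge to \<open>S \<phi>\<close>, and compactness of the unit sphere of the finite-dimensional
  \<open>X\<close> makes their directions converge, so \<open>S \<circ> \<delta>\<close> belongs to DA.
\<close>

type_synonym 'a functional = "('a \<Rightarrow> real) \<Rightarrow> real"

section \<open>Lipschitz norm\<close>

lemma Lip0I:
  assumes "f 0 = 0" "C \<ge> 0" "\<And>x y. norm (f x - f y) \<le> C * norm (x - y)"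
  shows "f \<in> Lip0"
proof -
  have "C-lipschitz_on UNIV f"
    by (rule lipschitz_onI) (use assms in \<open>auto simp: dist_norm\<close>)
  then show ?thesis using assms(1) by (auto simp: Lip0_def)
qed

lemma Lip0_zero_at: "f \<in> Lip0 \<Longrightarrow> f 0 = 0"
  by (simp add: Lip0_def)

lemma Lip0_zero [simp]: "(\<lambda>x. 0) \<in> Lip0"
  by (rule Lip0I[where C=0]) auto

lemma Lip0_add: "g \<in> Lip0 \<Longrightarrow> h \<in> Lip0 \<Longrightarrow> (\<lambda>x. g x + h x) \<in> Lip0"
  unfolding Lip0_def by (auto intro: lipschitz_on_add)

lemma Lip0_cmult:
  fixes g :: "'a::real_normed_vector \<Rightarrow> real"
  shows "g \<in> Lip0 \<Longrightarrow> (\<lambda>x. c * g x) \<in> Lip0"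
  unfolding Lip0_def by (auto intro: lipschitz_on_cmult_real)

lemma lip_norm_le:
  fixes f :: "'a::real_normed_vector \<Rightarrow> 'c::real_normed_vector"
  assumes nontrivial: "\<exists>x::'a. x \<noteq> 0"
    and bound: "\<And>x y. norm (f x - f y) \<le> C * norm (x - y)"
  shows "lip_norm f \<le> C"
  unfolding lip_norm_def
proof (rule cSUP_least)
  from nontrivial obtain x :: 'a where "x \<noteq> 0" by blast
  then show "{(x, y). x \<noteq> y} \<noteq> ({} :: ('a \<times> 'a) set)" by blast
next
  fix p :: "'a \<times> 'a" assume "p \<in> {(x, y). x \<noteq> y}"
  then show "norm (f (fst p) - f (snd p)) / norm (fst p - snd p) \<le> C"
    using bound[of "fst p" "snd p"] by (auto simp: pos_divide_le_eq)
qed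

lemma Lip0_quotient_le_lip_norm:
  assumes f: "f \<in> Lip0" and "x \<noteq> y"
  shows "norm (f x - f y) / norm (x - y) \<le> lip_norm f"
proof -
  obtain C where C: "C-lipschitz_on UNIV f" using f by (auto simp: Lip0_def)
  have "bdd_above ((\<lambda>p. norm (f (fst p) - f (snd p)) / norm (fst p - snd p)) ` {(x, y). x \<noteq> y})"
    using lipschitz_onD[OF C] by (intro bdd_aboveI2[where M=C]) (auto simp: dist_norm pos_divide_le_eq)
  from cSUP_upper[OF _ this, of "(x, y)"] show ?thesis
    using \<open>x \<noteq> y\<close> by (simp add: lip_norm_def)
qed

lemma Lip0_norm_diff_le:
  assumes "f \<in> Lip0"
  shows "norm (f x - f y) \<le> lip_norm f * norm (x - y)"
proof (cases "x = y")
  case False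
  with Lip0_quotient_le_lip_norm[OF assms False] show ?thesis
    by (simp add: pos_divide_le_eq)
qed simp

lemma Lip0_norm_le: "f \<in> Lip0 \<Longrightarrow> norm (f x) \<le> lip_norm f * norm x"
  using Lip0_norm_diff_le[of f x 0] Lip0_zero_at[of f] by simp

lemma lip_norm_nonneg:
  assumes nontrivial: "\<exists>x::'a::real_normed_vector. x \<noteq> 0" and f: "(f :: 'a \<Rightarrow> 'c::real_normed_vector) \<in> Lip0"
  shows "lip_norm f \<ge> 0"
proof -
  from nontrivial obtain x :: 'a where "x \<noteq> 0" by blast
  from Lip0_quotient_le_lip_norm[OF f this] show ?thesis
    by (meson divide_nonneg_nonneg norm_ge_zero order_trans)
qed

section \<open>The Lipschitz-free space\<close>

lemma delta_apply [simp]: "g \<in> Lip0 \<Longrightarrow> delta x g = g x"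
  by (simp add: delta_def)

lemma delta_apply_nonLip0 [simp]: "g \<notin> Lip0 \<Longrightarrow> delta x g = 0"
  by (simp add: delta_def)

definition delta_sum :: "'a::real_normed_vector set \<Rightarrow> ('a \<Rightarrow> real) \<Rightarrow> 'a functional" where
  "delta_sum F c = (\<lambda>g. \<Sum>x\<in>F. c x * delta x g)"

lemma delta_sum_apply: "g \<in> Lip0 \<Longrightarrow> delta_sum F c g = (\<Sum>x\<in>F. c x * g x)"
  by (simp add: delta_sum_def)

lemma delta_eq_delta_sum: "delta x = delta_sum {x} (\<lambda>_. 1)"
  by (simp add: delta_sum_def)

lemma delta_zero: "delta (0::'a::real_normed_vector) = (\<lambda>g. 0)"
  by (auto simp: delta_def Lip0_zero_at)

definition zero_outside :: "'a set \<Rightarrow> ('a \<Rightarrow> real) \<Rightarrow> 'a \<Rightarrow> real" where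
  "zero_outside A c x = (if x \<in> A then c x else 0)"

lemma sum_zero_outside:
  fixes v :: "'a \<Rightarrow> 'v::real_vector"
  assumes "finite C" "A \<subseteq> C"
  shows "(\<Sum>x\<in>C. zero_outside A c x *\<^sub>R v x) = (\<Sum>x\<in>A. c x *\<^sub>R v x)"
proof -
  have "(\<Sum>x\<in>C. zero_outside A c x *\<^sub>R v x) = (\<Sum>x\<in>C. if x \<in> A then c x *\<^sub>R v x else 0)"
    by (rule sum.cong) (auto simp: zero_outside_def)
  also have "\<dots> = (\<Sum>x\<in>A. c x *\<^sub>R v x)"
    using assms by (simp add: sum.inter_restrict[symmetric] Int_absorb1)
  finally show ?thesis .
qed

lemma sum_scaleR_lincomb:
  fixes v :: "'a \<Rightarrow> 'v::real_vector"
  assumes "finite A" "finite B"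
  shows "a *\<^sub>R (\<Sum>x\<in>A. c x *\<^sub>R v x) + b *\<^sub>R (\<Sum>x\<in>B. d x *\<^sub>R v x)
    = (\<Sum>x\<in>A \<union> B. (a * zero_outside A c x + b * zero_outside B d x) *\<^sub>R v x)"
proof -
  have "(\<Sum>x\<in>A \<union> B. (a * zero_outside A c x + b * zero_outside B d x) *\<^sub>R v x)
      = a *\<^sub>R (\<Sum>x\<in>A \<union> B. zero_outside A c x *\<^sub>R v x)
        + b *\<^sub>R (\<Sum>x\<in>A \<union> B. zero_outside B d x *\<^sub>R v x)"
    by (simp add: sum.distrib scaleR_sum_right scaleR_add_left)
  also have "\<dots> = a *\<^sub>R (\<Sum>x\<in>A. c x *\<^sub>R v x) + b *\<^sub>R (\<Sum>x\<in>B. d x *\<^sub>R v x)"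
    using sum_zero_outside[of "A \<union> B" A c v] sum_zero_outside[of "A \<union> B" B d v] assms by simp
  finally show ?thesis by simp
qed

lemma delta_sum_lincomb:
  assumes "finite A" "finite B"
  shows "a * delta_sum A c g + b * delta_sum B d g
    = delta_sum (A \<union> B) (\<lambda>x. a * zero_outside A c x + b * zero_outside B d x) g"
  using sum_scaleR_lincomb[OF assms, where v="\<lambda>x. delta x g" and a=a and c=c and b=b and d=d]
  by (simp add: delta_sum_def)

lemma Lip0_dualI:
  assumes "\<And>g h. g \<in> Lip0 \<Longrightarrow> h \<in> Lip0 \<Longrightarrow> \<phi> (\<lambda>x. g x + h x) = \<phi> g + \<phi> h"
    and "\<And>c g. g \<in> Lip0 \<Longrightarrow> \<phi> (\<lambda>x. c * g x) = c * \<phi> g"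
    and "\<And>g. g \<notin> Lip0 \<Longrightarrow> \<phi> g = 0"
    and "\<And>g. g \<in> Lip0 \<Longrightarrow> \<bar>\<phi> g\<bar> \<le> K * lip_norm g"
  shows "\<phi> \<in> Lip0_dual"
  using assms unfolding Lip0_dual_def by blast

lemma Lip0_dual_lincomb:
  assumes "\<phi> \<in> Lip0_dual" "\<psi> \<in> Lip0_dual"
  shows "(\<lambda>g. a * \<phi> g + b * \<psi> g) \<in> Lip0_dual"
proof -
  obtain K1 K2 where K: "\<forall>g\<in>Lip0. \<bar>\<phi> g\<bar> \<le> K1 * lip_norm g" "\<forall>g\<in>Lip0. \<bar>\<psi> g\<bar> \<le> K2 * lip_norm g"
    using assms unfolding Lip0_dual_def by blast
  show ?thesis
  proof (rule Lip0_dualI[where K="\<bar>a\<bar> * K1 + \<bar>b\<bar> * K2"])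
    fix g :: "'a \<Rightarrow> real" assume g: "g \<in> Lip0"
    have "\<bar>a * \<phi> g + b * \<psi> g\<bar> \<le> \<bar>a\<bar> * \<bar>\<phi> g\<bar> + \<bar>b\<bar> * \<bar>\<psi> g\<bar>"
      by (metis abs_mult abs_triangle_ineq)
    also have "\<dots> \<le> \<bar>a\<bar> * (K1 * lip_norm g) + \<bar>b\<bar> * (K2 * lip_norm g)"
      using K g by (intro add_mono mult_left_mono) auto
    finally show "\<bar>a * \<phi> g + b * \<psi> g\<bar> \<le> (\<bar>a\<bar> * K1 + \<bar>b\<bar> * K2) * lip_norm g"
      by (simp add: algebra_simps)
  qed (use assms in \<open>simp_all add: Lip0_dual_def algebra_simps\<close>)
qed

lemma Lip0_dual_diff:
  "\<phi> \<in> Lip0_dual \<Longrightarrow> \<psi> \<in> Lip0_dual \<Longrightarrow> (\<lambda>g. \<phi> g - \<psi> g) \<in> Lip0_dual"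
  using Lip0_dual_lincomb[of \<phi> \<psi> 1 "-1"] by simp

lemma delta_sum_in_Lip0_dual: "finite F \<Longrightarrow> delta_sum F c \<in> Lip0_dual"
proof (rule Lip0_dualI[where K="\<Sum>x\<in>F. \<bar>c x\<bar> * norm x"])
  fix g :: "'a \<Rightarrow> real" assume g: "g \<in> Lip0"
  have "\<bar>delta_sum F c g\<bar> \<le> (\<Sum>x\<in>F. \<bar>c x\<bar> * \<bar>g x\<bar>)"
    using g by (simp add: delta_sum_apply sum_abs[THEN order_trans] abs_mult)
  also have "\<dots> \<le> (\<Sum>x\<in>F. \<bar>c x\<bar> * norm x * lip_norm g)"
    using Lip0_norm_le[OF g] by (intro sum_mono) (simp add: mult.assoc mult.commute[of "norm _"] mult_left_mono)
  finally show "\<bar>delta_sum F c g\<bar> \<le> (\<Sum>x\<in>F. \<bar>c x\<bar> * norm x) * lip_norm g"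
    by (simp add: sum_distrib_right)
qed (simp_all add: delta_sum_apply Lip0_add Lip0_cmult distrib_left sum.distrib sum_distrib_left
       mult.left_commute delta_sum_def)

lemma abs_le_dual_norm:
  fixes \<phi> :: "'a::real_normed_vector functional"
  assumes nontrivial: "\<exists>x::'a. x \<noteq> 0" and \<phi>: "\<phi> \<in> Lip0_dual"
    and g: "g \<in> Lip0" "lip_norm g \<le> 1"
  shows "\<bar>\<phi> g\<bar> \<le> dual_norm \<phi>"
proof -
  obtain K where K: "\<And>g. g \<in> Lip0 \<Longrightarrow> \<bar>\<phi> g\<bar> \<le> K * lip_norm g"
    using \<phi> unfolding Lip0_dual_def by blast
  have "\<bar>\<phi> h\<bar> \<le> max K 0" if h: "h \<in> Lip0" "lip_norm h \<le> 1" for h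
  proof -
    have "\<bar>\<phi> h\<bar> \<le> K * lip_norm h" using K h(1) .
    also have "\<dots> \<le> max K 0 * lip_norm h"
      using lip_norm_nonneg[OF nontrivial h(1)] by (intro mult_right_mono) auto
    also have "\<dots> \<le> max K 0" using h(2) by (simp add: mult_left_le)
    finally show ?thesis .
  qed
  then have "bdd_above ((\<lambda>g. \<bar>\<phi> g\<bar>) ` {g \<in> (Lip0 :: ('a \<Rightarrow> real) set). lip_norm g \<le> 1})"
    by (intro bdd_aboveI2) auto
  from cSUP_upper[OF _ this, of g] g show ?thesis by (simp add: dual_norm_def)
qed

lemma dual_norm_le:
  fixes \<phi> :: "'a::real_normed_vector functional"
  assumes nontrivial: "\<exists>x::'a. x \<noteq> 0"
    and "\<And>g. g \<in> Lip0 \<Longrightarrow> lip_norm g \<le> 1 \<Longrightarrow> \<bar>\<phi> g\<bar> \<le> C"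
  shows "dual_norm \<phi> \<le> C"
  unfolding dual_norm_def
proof (rule cSUP_least)
  have "lip_norm (\<lambda>x::'a. 0::real) \<le> 1" by (rule lip_norm_le[OF nontrivial]) simp
  then show "{g \<in> (Lip0 :: ('a \<Rightarrow> real) set). lip_norm g \<le> 1} \<noteq> {}" by force
qed (use assms in auto)

lemma dual_norm_nonneg:
  fixes \<phi> :: "'a::real_normed_vector functional"
  assumes nontrivial: "\<exists>x::'a. x \<noteq> 0" and "\<phi> \<in> Lip0_dual"
  shows "0 \<le> dual_norm \<phi>"
proof -
  have "lip_norm (\<lambda>x::'a. 0::real) \<le> 1" by (rule lip_norm_le[OF nontrivial]) simp
  from abs_le_dual_norm[OF assms Lip0_zero this] show ?thesis by linarith
qed

lemma dual_norm_zero: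
  assumes nontrivial: "\<exists>x::'a::real_normed_vector. x \<noteq> 0"
  shows "dual_norm (\<lambda>g::'a \<Rightarrow> real. 0) = 0"
proof -
  have "(\<lambda>g::'a \<Rightarrow> real. 0) \<in> Lip0_dual" by (rule Lip0_dualI[where K=0]) auto
  with dual_norm_le[OF nontrivial, of "\<lambda>g. 0" 0] dual_norm_nonneg[OF nontrivial] show ?thesis
    by force
qed

lemma abs_le_dual_norm_mult_lip_norm:
  fixes \<phi> :: "'a::real_normed_vector functional"
  assumes nontrivial: "\<exists>x::'a. x \<noteq> 0" and \<phi>: "\<phi> \<in> Lip0_dual" and g: "g \<in> Lip0"
  shows "\<bar>\<phi> g\<bar> \<le> dual_norm \<phi> * lip_norm g"
proof -
  have hom: "\<And>c g. g \<in> Lip0 \<Longrightarrow> \<phi> (\<lambda>x. c * g x) = c * \<phi> g"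
    using \<phi> unfolding Lip0_dual_def by blast
  show ?thesis
  proof (cases "lip_norm g = 0")
    case True
    then have "g = (\<lambda>x. 0 * g x)"
      using Lip0_norm_le[OF g] by (auto simp: fun_eq_iff)
    then have "\<phi> g = 0" using hom[OF g, of 0] by simp
    then show ?thesis using True by simp
  next
    case False
    then have pos: "lip_norm g > 0" using lip_norm_nonneg[OF nontrivial g] by simp
    let ?g = "\<lambda>x. (1 / lip_norm g) * g x"
    have "lip_norm ?g \<le> 1"
    proof (rule lip_norm_le[OF nontrivial])
      fix x y
      have "norm (?g x - ?g y) = norm (g x - g y) / lip_norm g"
        using pos by (simp add: diff_divide_distrib[symmetric])
      also have "\<dots> \<le> 1 * norm (x - y)"
        using Lip0_norm_diff_le[OF g, of x y] pos by (simp add: pos_divide_le_eq mult.commute)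
      finally show "norm (?g x - ?g y) \<le> 1 * norm (x - y)" .
    qed
    then have "\<bar>\<phi> ?g\<bar> \<le> dual_norm \<phi>"
      by (rule abs_le_dual_norm[OF nontrivial \<phi> Lip0_cmult[OF g]])
    moreover have "\<phi> ?g = \<phi> g / lip_norm g" using hom[OF g, of "1 / lip_norm g"] by simp
    ultimately show ?thesis using pos by (simp add: abs_div pos_divide_le_eq)
  qed
qed

lemma dual_norm_lincomb_le:
  fixes \<phi> :: "'a::real_normed_vector functional"
  assumes nontrivial: "\<exists>x::'a. x \<noteq> 0" and "\<phi> \<in> Lip0_dual" "\<psi> \<in> Lip0_dual"
  shows "dual_norm (\<lambda>g. a * \<phi> g + b * \<psi> g) \<le> \<bar>a\<bar> * dual_norm \<phi> + \<bar>b\<bar> * dual_norm \<psi>"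
proof (rule dual_norm_le[OF nontrivial])
  fix g :: "'a \<Rightarrow> real" assume g: "g \<in> Lip0" "lip_norm g \<le> 1"
  have "\<bar>a * \<phi> g + b * \<psi> g\<bar> \<le> \<bar>a\<bar> * \<bar>\<phi> g\<bar> + \<bar>b\<bar> * \<bar>\<psi> g\<bar>"
    by (metis abs_mult abs_triangle_ineq)
  also have "\<dots> \<le> \<bar>a\<bar> * dual_norm \<phi> + \<bar>b\<bar> * dual_norm \<psi>"
    using abs_le_dual_norm[OF nontrivial assms(2) g] abs_le_dual_norm[OF nontrivial assms(3) g]
    by (intro add_mono mult_left_mono) auto
  finally show "\<bar>a * \<phi> g + b * \<psi> g\<bar> \<le> \<bar>a\<bar> * dual_norm \<phi> + \<bar>b\<bar> * dual_norm \<psi>" .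
qed

lemma dual_norm_triangle_sub:
  fixes \<phi> :: "'a::real_normed_vector functional"
  assumes nontrivial: "\<exists>x::'a. x \<noteq> 0" and "\<phi> \<in> Lip0_dual" "\<psi> \<in> Lip0_dual"
  shows "dual_norm \<psi> \<le> dual_norm \<phi> + dual_norm (\<lambda>g. \<phi> g - \<psi> g)"
  using dual_norm_lincomb_le[OF nontrivial assms(2) Lip0_dual_diff[OF assms(2,3)], of 1 "-1"]
  by simp

lemma free_space_iff:
  "\<phi> \<in> free_space \<longleftrightarrow> \<phi> \<in> Lip0_dual \<and>
     (\<forall>\<epsilon>>0. \<exists>F c. finite F \<and> dual_norm (\<lambda>g. \<phi> g - delta_sum F c g) < \<epsilon>)"
  unfolding free_space_def delta_span_def delta_sum_def by fastforce

lemma free_space_Lip0_dual: "\<phi> \<in> free_space \<Longrightarrow> \<phi> \<in> Lip0_dual"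
  by (simp add: free_space_iff)

lemma free_space_approx:
  assumes "\<phi> \<in> free_space" "\<epsilon> > 0"
  obtains F c where "finite F" "dual_norm (\<lambda>g. \<phi> g - delta_sum F c g) < \<epsilon>"
  using assms by (auto simp: free_space_iff)

lemma delta_sum_in_free_space:
  fixes F :: "'a::real_normed_vector set"
  assumes nontrivial: "\<exists>x::'a. x \<noteq> 0" and F: "finite F"
  shows "delta_sum F c \<in> free_space"
  unfolding free_space_iff
proof (intro conjI allI impI)
  show "delta_sum F c \<in> Lip0_dual" by (rule delta_sum_in_Lip0_dual[OF F])
  fix \<epsilon> :: real assume "\<epsilon> > 0"
  then show "\<exists>F' c'. finite F' \<and> dual_norm (\<lambda>g. delta_sum F c g - delta_sum F' c' g) < \<epsilon>"
    using F dual_norm_zero[OF nontrivial] by (intro exI[of _ F] exI[of _ c]) simp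
qed

lemma delta_in_free_space: "\<exists>x::'a. x \<noteq> 0 \<Longrightarrow> delta (x::'a::real_normed_vector) \<in> free_space"
  by (simp add: delta_eq_delta_sum delta_sum_in_free_space)

lemma free_space_lincomb:
  fixes \<phi> :: "'a::real_normed_vector functional"
  assumes nontrivial: "\<exists>x::'a. x \<noteq> 0" and \<phi>: "\<phi> \<in> free_space" and \<psi>: "\<psi> \<in> free_space"
  shows "(\<lambda>g. a * \<phi> g + b * \<psi> g) \<in> free_space"
  unfolding free_space_iff
proof (intro conjI allI impI)
  show "(\<lambda>g. a * \<phi> g + b * \<psi> g) \<in> Lip0_dual"
    using Lip0_dual_lincomb free_space_Lip0_dual \<phi> \<psi> by blast
  fix \<epsilon> :: real assume "\<epsilon> > 0"
  define \<epsilon>' where "\<epsilon>' = \<epsilon> / (\<bar>a\<bar> + \<bar>b\<bar> + 1)"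
  have \<epsilon>': "\<epsilon>' > 0" "(\<bar>a\<bar> + \<bar>b\<bar>) * \<epsilon>' < \<epsilon>"
    using \<open>\<epsilon> > 0\<close> by (auto simp: \<epsilon>'_def field_simps)
  obtain A c where A: "finite A" "dual_norm (\<lambda>g. \<phi> g - delta_sum A c g) < \<epsilon>'"
    using free_space_approx[OF \<phi> \<epsilon>'(1)] .
  obtain B d where B: "finite B" "dual_norm (\<lambda>g. \<psi> g - delta_sum B d g) < \<epsilon>'"
    using free_space_approx[OF \<psi> \<epsilon>'(1)] .
  let ?e = "\<lambda>x. a * zero_outside A c x + b * zero_outside B d x"
  have eq: "(\<lambda>g. a * \<phi> g + b * \<psi> g - delta_sum (A \<union> B) ?e g)
      = (\<lambda>g. a * (\<phi> g - delta_sum A c g) + b * (\<psi> g - delta_sum B d g))"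
    using delta_sum_lincomb[OF A(1) B(1), of a c _ b d] by (auto simp: algebra_simps)
  have "dual_norm (\<lambda>g. a * (\<phi> g - delta_sum A c g) + b * (\<psi> g - delta_sum B d g))
      \<le> \<bar>a\<bar> * dual_norm (\<lambda>g. \<phi> g - delta_sum A c g)
        + \<bar>b\<bar> * dual_norm (\<lambda>g. \<psi> g - delta_sum B d g)"
    using free_space_Lip0_dual[OF \<phi>] free_space_Lip0_dual[OF \<psi>] A(1) B(1)
    by (intro dual_norm_lincomb_le[OF nontrivial] Lip0_dual_diff delta_sum_in_Lip0_dual)
  also have "\<dots> \<le> (\<bar>a\<bar> + \<bar>b\<bar>) * \<epsilon>'"
    using A(2) B(2) by (simp add: distrib_right add_mono mult_left_mono)
  finally have "dual_norm (\<lambda>g. a * \<phi> g + b * \<psi> g - delta_sum (A \<union> B) ?e g) < \<epsilon>"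
    unfolding eq using \<epsilon>'(2) by linarith
  then show "\<exists>F e. finite F \<and> dual_norm (\<lambda>g. a * \<phi> g + b * \<psi> g - delta_sum F e g) < \<epsilon>"
    using A(1) B(1) by blast
qed

lemma free_space_diff:
  "\<exists>x::'a. x \<noteq> 0 \<Longrightarrow> \<phi> \<in> free_space \<Longrightarrow> \<psi> \<in> free_space \<Longrightarrow>
    (\<lambda>g. \<phi> g - \<psi> g) \<in> (free_space :: 'a::real_normed_vector functional set)"
  using free_space_lincomb[of \<phi> \<psi> 1 "-1"] by simp

lemma free_space_cmult:
  "\<exists>x::'a. x \<noteq> 0 \<Longrightarrow> \<phi> \<in> free_space \<Longrightarrow>
    (\<lambda>g. c * \<phi> g) \<in> (free_space :: 'a::real_normed_vector functional set)"
  using free_space_lincomb[of \<phi> \<phi> c 0] by simp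

section \<open>Operators on the free space\<close>

lemma bounded_ops_add:
  "T \<in> bounded_ops \<Longrightarrow> \<phi> \<in> free_space \<Longrightarrow> \<psi> \<in> free_space \<Longrightarrow> T (\<lambda>g. \<phi> g + \<psi> g) = T \<phi> + T \<psi>"
  by (simp add: bounded_ops_def)

lemma bounded_ops_scale:
  "T \<in> bounded_ops \<Longrightarrow> \<phi> \<in> free_space \<Longrightarrow> T (\<lambda>g. c * \<phi> g) = c *\<^sub>R T \<phi>"
  by (simp add: bounded_ops_def)

lemma bounded_ops_bound:
  fixes T :: "'a::real_normed_vector functional \<Rightarrow> 'b::real_normed_vector"
  assumes nontrivial: "\<exists>x::'a. x \<noteq> 0" and T: "T \<in> bounded_ops"
  obtains K where "K \<ge> 0" "\<And>\<phi>. \<phi> \<in> free_space \<Longrightarrow> norm (T \<phi>) \<le> K * dual_norm \<phi>"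
proof -
  obtain K where K: "\<forall>\<phi>\<in>free_space. norm (T \<phi>) \<le> K * dual_norm \<phi>"
    using T by (auto simp: bounded_ops_def)
  have "norm (T \<phi>) \<le> max K 0 * dual_norm \<phi>" if "\<phi> \<in> free_space" for \<phi>
  proof -
    have "norm (T \<phi>) \<le> K * dual_norm \<phi>" using K that by blast
    also have "\<dots> \<le> max K 0 * dual_norm \<phi>"
      using dual_norm_nonneg[OF nontrivial free_space_Lip0_dual[OF that]]
      by (intro mult_right_mono) auto
    finally show ?thesis .
  qed
  then show thesis using that[of "max K 0"] by simp
qed

lemma bounded_ops_diff:
  fixes T :: "'a::real_normed_vector functional \<Rightarrow> 'b::real_normed_vector"
  assumes nontrivial: "\<exists>x::'a. x \<noteq> 0" and T: "T \<in> bounded_ops"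
    and \<phi>: "\<phi> \<in> free_space" and \<psi>: "\<psi> \<in> free_space"
  shows "T (\<lambda>g. \<phi> g - \<psi> g) = T \<phi> - T \<psi>"
  using bounded_ops_add[OF T free_space_diff[OF nontrivial \<phi> \<psi>] \<psi>] by simp

lemma bounded_ops_delta_zero:
  fixes T :: "'a::real_normed_vector functional \<Rightarrow> 'b::real_normed_vector"
  assumes nontrivial: "\<exists>x::'a. x \<noteq> 0" and T: "T \<in> bounded_ops"
  shows "T (delta 0) = 0"
  using bounded_ops_scale[OF T delta_in_free_space[OF nontrivial], of 0 0]
  by (simp add: delta_zero)

lemma bounded_ops_delta_sum:
  fixes T :: "'a::real_normed_vector functional \<Rightarrow> 'b::real_normed_vector"
  assumes nontrivial: "\<exists>x::'a. x \<noteq> 0" and T: "T \<in> bounded_ops" and F: "finite F"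
  shows "T (delta_sum F c) = (\<Sum>x\<in>F. c x *\<^sub>R T (delta x))"
  using F
proof (induction F rule: finite_induct)
  case empty
  then show ?case using bounded_ops_delta_zero[OF nontrivial T] by (simp add: delta_sum_def delta_zero)
next
  case (insert a F)
  have "delta_sum (insert a F) c = (\<lambda>g. c a * delta a g + delta_sum F c g)"
    using insert by (simp add: delta_sum_def)
  then show ?case
    using insert bounded_ops_add[OF T free_space_cmult[OF nontrivial delta_in_free_space[OF nontrivial]]
        delta_sum_in_free_space[OF nontrivial insert(1)]]
      bounded_ops_scale[OF T delta_in_free_space[OF nontrivial]]
    by simp
qed

lemma bounded_ops_minus:
  assumes T: "T \<in> bounded_ops" and S: "S \<in> bounded_ops"
  shows "(\<lambda>\<phi>. T \<phi> - S \<phi>) \<in> bounded_ops"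
proof -
  obtain K1 where K1: "\<forall>\<phi>\<in>free_space. norm (T \<phi>) \<le> K1 * dual_norm \<phi>"
    using T by (auto simp: bounded_ops_def)
  obtain K2 where K2: "\<forall>\<phi>\<in>free_space. norm (S \<phi>) \<le> K2 * dual_norm \<phi>"
    using S by (auto simp: bounded_ops_def)
  have "norm (T \<phi> - S \<phi>) \<le> (K1 + K2) * dual_norm \<phi>" if "\<phi> \<in> free_space" for \<phi>
  proof -
    have "norm (T \<phi> - S \<phi>) \<le> K1 * dual_norm \<phi> + K2 * dual_norm \<phi>"
      using K1 K2 that norm_triangle_ineq4[of "T \<phi>" "S \<phi>"] by force
    then show ?thesis by (simp add: distrib_right)
  qed
  moreover have "T (\<lambda>g. \<phi> g + \<psi> g) - S (\<lambda>g. \<phi> g + \<psi> g) = (T \<phi> - S \<phi>) + (T \<psi> - S \<psi>)"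
    if "\<phi> \<in> free_space" "\<psi> \<in> free_space" for \<phi> \<psi>
    using bounded_ops_add[OF T that] bounded_ops_add[OF S that] by simp
  moreover have "T (\<lambda>g. c * \<phi> g) - S (\<lambda>g. c * \<phi> g) = c *\<^sub>R (T \<phi> - S \<phi>)"
    if "\<phi> \<in> free_space" for c \<phi>
    using bounded_ops_scale[OF T that] bounded_ops_scale[OF S that] by (simp add: scaleR_diff_right)
  ultimately show ?thesis unfolding bounded_ops_def by blast
qed

lemma norm_le_op_norm:
  fixes T :: "'a::real_normed_vector functional \<Rightarrow> 'b::real_normed_vector"
  assumes nontrivial: "\<exists>x::'a. x \<noteq> 0" and T: "T \<in> bounded_ops"
    and \<phi>: "\<phi> \<in> free_space" "dual_norm \<phi> \<le> 1"
  shows "norm (T \<phi>) \<le> op_norm T"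
proof -
  obtain K where K: "K \<ge> 0" "\<And>\<phi>. \<phi> \<in> free_space \<Longrightarrow> norm (T \<phi>) \<le> K * dual_norm \<phi>"
    using bounded_ops_bound[OF nontrivial T] by blast
  have "norm (T \<psi>) \<le> K" if "\<psi> \<in> free_space" "dual_norm \<psi> \<le> 1" for \<psi>
    using K(2)[OF that(1)] mult_left_mono[OF that(2) K(1)] by simp
  then have "bdd_above ((\<lambda>\<phi>. norm (T \<phi>)) ` {\<phi> \<in> (free_space :: 'a functional set). dual_norm \<phi> \<le> 1})"
    by (intro bdd_aboveI2) auto
  from cSUP_upper[OF _ this, of \<phi>] \<phi> show ?thesis by (simp add: op_norm_def)
qed

lemma norm_delta_diff_le_op_norm:
  fixes T :: "'a::real_normed_vector functional \<Rightarrow> 'b::real_normed_vector"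
  assumes nontrivial: "\<exists>x::'a. x \<noteq> 0" and T: "T \<in> bounded_ops"
  shows "norm (T (delta x) - T (delta y)) \<le> op_norm T * norm (x - y)"
proof (cases "x = y")
  case False
  let ?d = "norm (x - y)"
  have d: "?d > 0" using False by simp
  have diff: "(\<lambda>g. delta x g - delta y g) \<in> free_space"
    by (intro free_space_diff delta_in_free_space nontrivial)
  let ?m = "\<lambda>g. (1 / ?d) * (delta x g - delta y g)"
  have m_le: "dual_norm ?m \<le> 1"
  proof (rule dual_norm_le[OF nontrivial])
    fix g :: "'a \<Rightarrow> real" assume g: "g \<in> Lip0" "lip_norm g \<le> 1"
    have "\<bar>g x - g y\<bar> \<le> 1 * ?d"
      using Lip0_norm_diff_le[OF g(1), of x y] mult_right_mono[OF g(2) norm_ge_zero[of "x - y"]]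
      by simp
    then show "\<bar>?m g\<bar> \<le> 1" using g(1) d by (simp add: abs_mult pos_divide_le_eq)
  qed
  have "T ?m = (1 / ?d) *\<^sub>R (T (delta x) - T (delta y))"
    using bounded_ops_scale[OF T diff, of "1 / ?d"] bounded_ops_diff[OF nontrivial T]
      delta_in_free_space[OF nontrivial] by simp
  moreover have "norm (T ?m) \<le> op_norm T"
    by (rule norm_le_op_norm[OF nontrivial T free_space_cmult[OF nontrivial diff] m_le])
  ultimately have "norm (T (delta x) - T (delta y)) / ?d \<le> op_norm T" by simp
  then show ?thesis using d by (simp add: pos_divide_le_eq)
qed simp

lemma delta_comp_Lip0:
  fixes T :: "'a::real_normed_vector functional \<Rightarrow> 'b::real_normed_vector"
  assumes nontrivial: "\<exists>x::'a. x \<noteq> 0" and T: "T \<in> bounded_ops"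
  shows "(\<lambda>x. T (delta x)) \<in> Lip0" and "lip_norm (\<lambda>x. T (delta x)) \<le> op_norm T"
proof -
  obtain x :: 'a where "x \<noteq> 0" using nontrivial by blast
  then have "0 \<le> op_norm T * norm (x - 0)"
    using norm_delta_diff_le_op_norm[OF nontrivial T, of x 0] norm_ge_zero order_trans by blast
  then have "0 \<le> op_norm T"
    using \<open>x \<noteq> 0\<close> by (simp add: zero_le_mult_iff)
  with norm_delta_diff_le_op_norm[OF nontrivial T] show "(\<lambda>x. T (delta x)) \<in> Lip0"
    by (intro Lip0I bounded_ops_delta_zero[OF nontrivial T])
  show "lip_norm (\<lambda>x. T (delta x)) \<le> op_norm T"
    by (rule lip_norm_le[OF nontrivial norm_delta_diff_le_op_norm[OF nontrivial T]])
qed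

section \<open>Norming functionals and McShane extension\<close>

lemma functional_extension_bound:
  fixes \<xi> :: "'b::real_normed_vector \<Rightarrow> real"
  assumes l: "linear \<xi>" and y: "y \<in> span H"
    and bound: "\<And>z. z \<in> span H \<Longrightarrow> \<xi> z \<le> norm z"
    and below: "\<And>z. z \<in> span H \<Longrightarrow> \<xi> z - norm (z - x) \<le> c"
    and above: "\<And>z. z \<in> span H \<Longrightarrow> c \<le> norm (z + x) - \<xi> z"
  shows "\<xi> y + t * c \<le> norm (y + t *\<^sub>R x)"
proof -
  consider "t = 0" | "t > 0" | "t < 0" by linarith
  then show ?thesis
  proof cases
    case 1
    then show ?thesis using bound[OF y] by simp
  next
    case 2
    have eq: "(1 / t) *\<^sub>R y + x = (1 / t) *\<^sub>R (y + t *\<^sub>R x)"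
      using 2 by (simp add: scaleR_add_right)
    have "c \<le> norm ((1 / t) *\<^sub>R y + x) - \<xi> ((1 / t) *\<^sub>R y)"
      using above y by (simp add: span_scale)
    also have "\<dots> = (norm (y + t *\<^sub>R x) - \<xi> y) / t"
      using 2 l by (simp add: eq linear_cmul diff_divide_distrib)
    finally show ?thesis using 2 by (simp add: le_divide_eq mult.commute)
  next
    case 3
    define s where "s = - t"
    have s: "s > 0" using 3 by (simp add: s_def)
    have eq: "(1 / s) *\<^sub>R y - x = (1 / s) *\<^sub>R (y + t *\<^sub>R x)"
      using s by (simp add: s_def scaleR_add_right)
    have "\<xi> ((1 / s) *\<^sub>R y) - norm ((1 / s) *\<^sub>R y - x) \<le> c"
      using below y by (simp add: span_scale)
    then have "(\<xi> y - norm (y + t *\<^sub>R x)) / s \<le> c"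
      using s l by (simp add: eq linear_cmul diff_divide_distrib)
    then have "\<xi> y - norm (y + t *\<^sub>R x) \<le> c * s" using s by (simp add: pos_divide_le_eq)
    moreover have "c * s = - (t * c)" by (simp add: s_def)
    ultimately show ?thesis by linarith
  qed
qed

lemma functional_extension_constant:
  fixes \<xi> :: "'b::real_normed_vector \<Rightarrow> real"
  assumes l: "linear \<xi>" and bound: "\<And>v. v \<in> span H \<Longrightarrow> \<bar>\<xi> v\<bar> \<le> norm v"
  obtains c where "\<And>y. y \<in> span H \<Longrightarrow> \<xi> y - norm (y - x) \<le> c"
    "\<And>z. z \<in> span H \<Longrightarrow> c \<le> norm (z + x) - \<xi> z"
proof -
  have key: "\<xi> y - norm (y - x) \<le> norm (z + x) - \<xi> z" if "y \<in> span H" "z \<in> span H" for y z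
  proof -
    have "\<xi> y + \<xi> z \<le> norm (y + z)"
      using bound[of "y + z"] that l by (simp add: span_add linear_add)
    also have "\<dots> \<le> norm (y - x) + norm (z + x)"
      using norm_triangle_ineq[of "y - x" "z + x"] by simp
    finally show ?thesis by simp
  qed
  define c where "c = (SUP y\<in>span H. \<xi> y - norm (y - x))"
  have bdd: "bdd_above ((\<lambda>y. \<xi> y - norm (y - x)) ` span H)"
    using key[OF _ span_zero] by (intro bdd_aboveI2) auto
  show thesis
  proof (rule that)
    show "\<xi> y - norm (y - x) \<le> c" if "y \<in> span H" for y
      unfolding c_def using cSUP_upper[OF that bdd] .
    show "c \<le> norm (z + x) - \<xi> z" if "z \<in> span H" for z
      unfolding c_def using key[OF _ that] span_zero by (intro cSUP_least) auto
  qed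
qed

lemma linear_functional_extend_insert:
  fixes \<xi> :: "'b::real_normed_vector \<Rightarrow> real"
  assumes l: "linear \<xi>" and bound: "\<And>v. v \<in> span H \<Longrightarrow> \<bar>\<xi> v\<bar> \<le> norm v" and x: "x \<notin> span H"
  obtains \<xi>' where "linear \<xi>'" "\<And>v. v \<in> span H \<Longrightarrow> \<xi>' v = \<xi> v"
    "\<And>v. v \<in> span (insert x H) \<Longrightarrow> \<bar>\<xi>' v\<bar> \<le> norm v"
proof -
  obtain c where below: "\<And>y. y \<in> span H \<Longrightarrow> \<xi> y - norm (y - x) \<le> c"
    and above: "\<And>z. z \<in> span H \<Longrightarrow> c \<le> norm (z + x) - \<xi> z"
    using functional_extension_constant[OF l bound] by blast
  obtain B where B: "B \<subseteq> H" "independent B" "H \<subseteq> span B" by (rule basis_exists)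
  have spB: "span B = span H"
    using B by (metis span_mono span_span subset_antisym)
  have "independent (insert x B)" using B(2) x spB by (simp add: independent_insertI)
  then obtain \<xi>' where \<xi>': "linear \<xi>'" "\<And>z. z \<in> insert x B \<Longrightarrow> \<xi>' z = (if z = x then c else \<xi> z)"
    using linear_independent_extend[of "insert x B" "\<lambda>z. if z = x then c else \<xi> z"] by blast
  have agree: "\<xi>' v = \<xi> v" if "v \<in> span H" for v
  proof -
    have "\<xi>' z = \<xi> z" if "z \<in> B" for z
      using \<xi>'(2)[of z] that x spB span_base by fastforce
    then show ?thesis using linear_eq_on_span[OF \<xi>'(1) l] that spB by blast
  qed
  have upper: "\<xi>' v \<le> norm v" if v: "v \<in> span (insert x H)" for v
  proof -
    obtain t where t: "v - t *\<^sub>R x \<in> span H" using v by (auto simp: span_insert)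
    have "\<xi>' v = \<xi> (v - t *\<^sub>R x) + t * c"
      using agree[OF t] \<xi>' by (simp add: linear_diff linear_cmul)
    also have "\<dots> \<le> norm (v - t *\<^sub>R x + t *\<^sub>R x)"
      using functional_extension_bound[OF l t _ below above] bound abs_le_D1 by blast
    finally show ?thesis by simp
  qed
  have "\<bar>\<xi>' v\<bar> \<le> norm v" if "v \<in> span (insert x H)" for v
    using upper[OF that] upper[of "- v"] that \<xi>'(1) by (simp add: span_neg linear_neg)
  then show thesis using that \<xi>'(1) agree by blast
qed

lemma norming_functional_on_span:
  fixes w :: "'b::real_normed_vector"
  assumes "finite G"
  obtains \<xi> where "linear \<xi>" "\<xi> w = norm w" "\<And>v. v \<in> span (insert w G) \<Longrightarrow> \<bar>\<xi> v\<bar> \<le> norm v"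
proof -
  from assms have "\<exists>\<xi>. linear \<xi> \<and> \<xi> w = norm w \<and> (\<forall>v\<in>span (insert w G). \<bar>\<xi> v\<bar> \<le> norm v)"
  proof (induction G rule: finite_induct)
    case empty
    show ?case
    proof (cases "w = 0")
      case True
      then show ?thesis by (intro exI[of _ "\<lambda>v. 0"]) (simp add: linear_zero)
    next
      case False
      then have "independent {w}" by simp
      then obtain \<xi> where \<xi>: "linear \<xi>" "\<xi> w = norm w"
        using linear_independent_extend[of "{w}" "\<lambda>_. norm w"] by auto
      have "\<bar>\<xi> v\<bar> \<le> norm v" if "v \<in> span {w}" for v
        using that \<xi> by (auto simp: span_singleton linear_cmul abs_mult)
      then show ?thesis using \<xi> by auto
    qed
  next
    case (insert x G)
    then obtain \<xi> where \<xi>: "linear \<xi>" "\<xi> w = norm w" "\<forall>v\<in>span (insert w G). \<bar>\<xi> v\<bar> \<le> norm v"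
      by blast
    have sp: "span (insert w (insert x G)) = span (insert x (insert w G))"
      by (simp add: insert_commute)
    show ?case
    proof (cases "x \<in> span (insert w G)")
      case True
      then show ?thesis using \<xi> sp span_redundant[OF True] by auto
    next
      case False
      obtain \<xi>' where \<xi>': "linear \<xi>'" "\<And>v. v \<in> span (insert w G) \<Longrightarrow> \<xi>' v = \<xi> v"
        "\<And>v. v \<in> span (insert x (insert w G)) \<Longrightarrow> \<bar>\<xi>' v\<bar> \<le> norm v"
        using linear_functional_extend_insert[OF \<xi>(1) _ False] \<xi>(3) by blast
      have "\<xi>' w = norm w" using \<xi>'(2)[of w] \<xi>(2) by (simp add: span_base)
      then show ?thesis using \<xi>' sp by auto
    qed
  qed
  then show thesis using that by blast
qed

lemma mcshane_extension:
  fixes h :: "'a::real_normed_vector \<Rightarrow> real"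
  assumes A: "finite A" "A \<noteq> {}" and L: "L \<ge> 0"
    and h: "\<And>x y. x \<in> A \<Longrightarrow> y \<in> A \<Longrightarrow> \<bar>h x - h y\<bar> \<le> L * norm (x - y)"
  obtains H where "\<And>x. x \<in> A \<Longrightarrow> H x = h x" "\<And>x y. \<bar>H x - H y\<bar> \<le> L * norm (x - y)"
proof -
  define H where "H x = Min ((\<lambda>a. h a + L * norm (x - a)) ` A)" for x
  have fin: "finite ((\<lambda>a. h a + L * norm (x - a)) ` A)" "(\<lambda>a. h a + L * norm (x - a)) ` A \<noteq> {}"
    for x using A by auto
  have "H a = h a" if a: "a \<in> A" for a
  proof (rule antisym)
    have "h a + L * norm (a - a) \<in> (\<lambda>b. h b + L * norm (a - b)) ` A" using a by blast
    then show "H a \<le> h a" unfolding H_def using Min_le[OF fin(1)] by fastforce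
    show "h a \<le> H a" unfolding H_def
      using h[OF a] by (intro Min.boundedI[OF fin]) (fastforce simp: abs_le_iff)
  qed
  moreover have le: "H x \<le> H y + L * norm (x - y)" for x y
  proof -
    obtain b where b: "b \<in> A" "H y = h b + L * norm (y - b)"
      using Min_in[OF fin, of y] unfolding H_def by auto
    have "H x \<le> h b + L * norm (x - b)" unfolding H_def using Min_le[OF fin(1)] b(1) by blast
    also have "\<dots> \<le> h b + L * (norm (x - y) + norm (y - b))"
      using norm_triangle_ineq[of "x - y" "y - b"] L by (simp add: mult_left_mono)
    finally show ?thesis using b by (simp add: algebra_simps)
  qed
  moreover have "\<bar>H x - H y\<bar> \<le> L * norm (x - y)" for x y
    using le[of x y] le[of y x] by (simp add: norm_minus_commute abs_le_iff)
  ultimately show thesis using that by blast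
qed

lemma sum_le_dual_norm_delta_sum:
  fixes h :: "'a::real_normed_vector \<Rightarrow> real"
  assumes nontrivial: "\<exists>x::'a. x \<noteq> 0" and F: "finite F" and h0: "h 0 = 0" and L: "L \<ge> 0"
    and h: "\<And>x y. x \<in> insert 0 F \<Longrightarrow> y \<in> insert 0 F \<Longrightarrow> \<bar>h x - h y\<bar> \<le> L * norm (x - y)"
  shows "(\<Sum>x\<in>F. c x * h x) \<le> dual_norm (delta_sum F c) * L"
proof -
  obtain H where H: "\<And>x. x \<in> insert 0 F \<Longrightarrow> H x = h x" "\<And>x y. \<bar>H x - H y\<bar> \<le> L * norm (x - y)"
    using mcshane_extension[of "insert 0 F" L h] F L h by blast
  have H_Lip0: "H \<in> Lip0" using H h0 L by (intro Lip0I) auto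
  have "(\<Sum>x\<in>F. c x * h x) = delta_sum F c H"
    using H(1) by (simp add: delta_sum_apply[OF H_Lip0])
  also have "\<dots> \<le> dual_norm (delta_sum F c) * lip_norm H"
    using abs_le_dual_norm_mult_lip_norm[OF nontrivial delta_sum_in_Lip0_dual[OF F, of c] H_Lip0] by simp
  also have "\<dots> \<le> dual_norm (delta_sum F c) * L"
    using lip_norm_le[OF nontrivial, of H L] H(2) dual_norm_nonneg[OF nontrivial delta_sum_in_Lip0_dual[OF F]]
    by (simp add: mult_left_mono)
  finally show ?thesis .
qed

lemma in_span_insert_image:
  assumes "f 0 = 0" "x \<in> insert 0 F"
  shows "f x \<in> span (insert w (f ` F))"
  using assms by (auto simp: span_base span_zero)

lemma norm_sum_le_lip_norm_mult_dual_norm: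
  fixes f :: "'a::real_normed_vector \<Rightarrow> 'b::real_normed_vector"
  assumes nontrivial: "\<exists>x::'a. x \<noteq> 0" and f: "f \<in> Lip0" and F: "finite F"
  shows "norm (\<Sum>x\<in>F. c x *\<^sub>R f x) \<le> lip_norm f * dual_norm (delta_sum F c)"
proof -
  define v where "v = (\<Sum>x\<in>F. c x *\<^sub>R f x)"
  obtain \<xi> where \<xi>: "linear \<xi>" "\<xi> v = norm v" "\<And>y. y \<in> span (insert v (f ` F)) \<Longrightarrow> \<bar>\<xi> y\<bar> \<le> norm y"
    using norming_functional_on_span[of "f ` F" v] F by blast
  have "\<bar>\<xi> (f x) - \<xi> (f y)\<bar> \<le> lip_norm f * norm (x - y)"
    if "x \<in> insert 0 F" "y \<in> insert 0 F" for x y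
  proof -
    have "\<bar>\<xi> (f x - f y)\<bar> \<le> norm (f x - f y)"
      using \<xi>(3) in_span_insert_image[of f, OF Lip0_zero_at[OF f]] that by (simp add: span_diff)
    then show ?thesis using Lip0_norm_diff_le[OF f, of x y] \<xi>(1) by (simp add: linear_diff)
  qed
  then have "(\<Sum>x\<in>F. c x * \<xi> (f x)) \<le> dual_norm (delta_sum F c) * lip_norm f"
    using sum_le_dual_norm_delta_sum[OF nontrivial F, of "\<lambda>x. \<xi> (f x)"] \<xi>(1)
      Lip0_zero_at[OF f] lip_norm_nonneg[OF nontrivial f] by (simp add: linear_0)
  moreover have "(\<Sum>x\<in>F. c x * \<xi> (f x)) = \<xi> v"
    unfolding v_def using \<xi>(1) by (simp add: linear_sum linear_cmul)
  ultimately show ?thesis using \<xi>(2) by (simp add: v_def mult.commute)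
qed

section \<open>Linearization of Lipschitz maps\<close>

lemma Cauchy_if_norm_diff_le:
  fixes s :: "nat \<Rightarrow> 'a::real_normed_vector"
  assumes le: "\<And>m n. norm (s m - s n) \<le> e m + e n" and e: "e \<longlonglongrightarrow> 0"
  shows "Cauchy s"
proof (rule CauchyI)
  fix \<epsilon> :: real assume "\<epsilon> > 0"
  then obtain N where N: "\<And>n. n \<ge> N \<Longrightarrow> \<bar>e n\<bar> < \<epsilon> / 2"
    using LIMSEQ_D[OF e, of "\<epsilon> / 2"] by auto
  have "norm (s m - s n) < \<epsilon>" if "N \<le> m" "N \<le> n" for m n
    using le[of m n] N[OF that(1)] N[OF that(2)] by (simp add: abs_less_iff)
  then show "\<exists>M. \<forall>m\<ge>M. \<forall>n\<ge>M. norm (s m - s n) < \<epsilon>" by blast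
qed

definition approx :: "'a::real_normed_vector functional \<Rightarrow> nat \<Rightarrow> 'a set \<times> ('a \<Rightarrow> real)" where
  "approx \<phi> k = (SOME p. finite (fst p) \<and>
     dual_norm (\<lambda>g. \<phi> g - delta_sum (fst p) (snd p) g) < inverse (real (Suc k)))"

lemma approx_spec:
  assumes "\<phi> \<in> free_space"
  shows "finite (fst (approx \<phi> k))"
    and "dual_norm (\<lambda>g. \<phi> g - delta_sum (fst (approx \<phi> k)) (snd (approx \<phi> k)) g) < inverse (real (Suc k))"
proof -
  obtain F c where "finite F" "dual_norm (\<lambda>g. \<phi> g - delta_sum F c g) < inverse (real (Suc k))"
    using free_space_approx[OF assms, of "inverse (real (Suc k))"] by auto
  then have "\<exists>p. finite (fst p) \<and> dual_norm (\<lambda>g. \<phi> g - delta_sum (fst p) (snd p) g) < inverse (real (Suc k))"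
    by (intro exI[of _ "(F, c)"]) simp
  from someI_ex[OF this]
  show "finite (fst (approx \<phi> k))"
    and "dual_norm (\<lambda>g. \<phi> g - delta_sum (fst (approx \<phi> k)) (snd (approx \<phi> k)) g) < inverse (real (Suc k))"
    unfolding approx_def by blast+
qed

lemma approx_tendsto:
  fixes \<phi> :: "'a::real_normed_vector functional"
  assumes nontrivial: "\<exists>x::'a. x \<noteq> 0" and \<phi>: "\<phi> \<in> free_space"
  shows "(\<lambda>k. dual_norm (\<lambda>g. \<phi> g - delta_sum (fst (approx \<phi> k)) (snd (approx \<phi> k)) g)) \<longlonglongrightarrow> 0"
proof (rule tendsto_sandwich[OF _ _ tendsto_const LIMSEQ_inverse_real_of_nat])
  show "\<forall>\<^sub>F k in sequentially. 0 \<le> dual_norm (\<lambda>g. \<phi> g - delta_sum (fst (approx \<phi> k)) (snd (approx \<phi> k)) g)"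
    using free_space_Lip0_dual[OF \<phi>] approx_spec(1)[OF \<phi>]
    by (intro always_eventually allI dual_norm_nonneg[OF nontrivial] Lip0_dual_diff delta_sum_in_Lip0_dual)
  show "\<forall>\<^sub>F k in sequentially.
      dual_norm (\<lambda>g. \<phi> g - delta_sum (fst (approx \<phi> k)) (snd (approx \<phi> k)) g) \<le> inverse (real (Suc k))"
    using approx_spec(2)[OF \<phi>] by (intro always_eventually allI less_imp_le)
qed

text \<open>Only meaningful on \<open>free_space\<close>, where by \<open>linearization_tendsto\<close> it is the limit along
  every approximation of \<open>\<phi>\<close> by finite combinations of deltas.\<close>

definition linearization :: "('a::real_normed_vector \<Rightarrow> 'b::real_normed_vector) \<Rightarrow> 'a functional \<Rightarrow> 'b" where
  "linearization f \<phi> = lim (\<lambda>k. \<Sum>x\<in>fst (approx \<phi> k). snd (approx \<phi> k) x *\<^sub>R f x)"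

locale Lip0_map =
  fixes f :: "'a::real_normed_vector \<Rightarrow> 'b::banach"
  assumes nontrivial: "\<exists>x::'a. x \<noteq> 0" and Lip0: "f \<in> Lip0"
begin

lemma norm_sum_diff_le:
  assumes \<phi>: "\<phi> \<in> Lip0_dual" and A: "finite A" and B: "finite B"
  shows "norm ((\<Sum>x\<in>A. a x *\<^sub>R f x) - (\<Sum>x\<in>B. b x *\<^sub>R f x))
    \<le> lip_norm f * (dual_norm (\<lambda>g. \<phi> g - delta_sum A a g) + dual_norm (\<lambda>g. \<phi> g - delta_sum B b g))"
proof -
  let ?d = "\<lambda>x. 1 * zero_outside A a x + (-1) * zero_outside B b x"
  have "(\<Sum>x\<in>A. a x *\<^sub>R f x) - (\<Sum>x\<in>B. b x *\<^sub>R f x)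
      = 1 *\<^sub>R (\<Sum>x\<in>A. a x *\<^sub>R f x) + (-1) *\<^sub>R (\<Sum>x\<in>B. b x *\<^sub>R f x)"
    by simp
  also have "\<dots> = (\<Sum>x\<in>A \<union> B. ?d x *\<^sub>R f x)"
    by (rule sum_scaleR_lincomb[OF A B])
  also have "norm \<dots> \<le> lip_norm f * dual_norm (delta_sum (A \<union> B) ?d)"
    using A B by (intro norm_sum_le_lip_norm_mult_dual_norm nontrivial Lip0) simp
  also have "delta_sum (A \<union> B) ?d = (\<lambda>g. 1 * (\<phi> g - delta_sum B b g) + (-1) * (\<phi> g - delta_sum A a g))"
    using delta_sum_lincomb[OF A B, of 1 a _ "-1" b] by (auto simp: algebra_simps)
  also have "lip_norm f * dual_norm \<dots>
      \<le> lip_norm f * (dual_norm (\<lambda>g. \<phi> g - delta_sum A a g) + dual_norm (\<lambda>g. \<phi> g - delta_sum B b g))"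
    using dual_norm_lincomb_le[OF nontrivial Lip0_dual_diff[OF \<phi> delta_sum_in_Lip0_dual[OF B, of b]]
        Lip0_dual_diff[OF \<phi> delta_sum_in_Lip0_dual[OF A, of a]], of 1 "-1"]
      lip_norm_nonneg[OF nontrivial Lip0]
    by (intro mult_left_mono) auto
  finally show ?thesis .
qed

lemma linearization_tendsto:
  assumes \<phi>: "\<phi> \<in> free_space" and F: "\<And>k. finite (F k)"
    and approximating: "(\<lambda>k. dual_norm (\<lambda>g. \<phi> g - delta_sum (F k) (c k) g)) \<longlonglongrightarrow> 0"
  shows "(\<lambda>k. \<Sum>x\<in>F k. c k x *\<^sub>R f x) \<longlonglongrightarrow> linearization f \<phi>"
proof -
  define s where "s k = (\<Sum>x\<in>fst (approx \<phi> k). snd (approx \<phi> k) x *\<^sub>R f x)" for k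
  define e where "e k = lip_norm f * dual_norm (\<lambda>g. \<phi> g - delta_sum (fst (approx \<phi> k)) (snd (approx \<phi> k)) g)"
    for k
  have \<phi>': "\<phi> \<in> Lip0_dual" by (rule free_space_Lip0_dual[OF \<phi>])
  have e: "e \<longlonglongrightarrow> 0"
    unfolding e_def using tendsto_mult[OF tendsto_const approx_tendsto[OF nontrivial \<phi>]] by simp
  have "norm (s m - s n) \<le> e m + e n" for m n
    using norm_sum_diff_le[OF \<phi>' approx_spec(1)[OF \<phi>] approx_spec(1)[OF \<phi>]]
    unfolding s_def e_def by (simp add: distrib_left)
  then have "Cauchy s" using e by (rule Cauchy_if_norm_diff_le)
  then have "convergent s" by (rule Cauchy_convergent)
  then have s: "s \<longlonglongrightarrow> linearization f \<phi>"
    unfolding linearization_def s_def[abs_def] by (simp add: convergent_LIMSEQ_iff)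
  have "(\<lambda>k. (\<Sum>x\<in>F k. c k x *\<^sub>R f x) - s k) \<longlonglongrightarrow> 0"
  proof (rule Lim_null_comparison)
    show "\<forall>\<^sub>F k in sequentially. norm ((\<Sum>x\<in>F k. c k x *\<^sub>R f x) - s k)
        \<le> lip_norm f * dual_norm (\<lambda>g. \<phi> g - delta_sum (F k) (c k) g) + e k"
      using norm_sum_diff_le[OF \<phi>' F approx_spec(1)[OF \<phi>]]
      unfolding s_def e_def by (intro always_eventually allI) (simp add: distrib_left)
    show "(\<lambda>k. lip_norm f * dual_norm (\<lambda>g. \<phi> g - delta_sum (F k) (c k) g) + e k) \<longlonglongrightarrow> 0"
      using tendsto_add[OF tendsto_mult[OF tendsto_const approximating] e] by simp
  qed
  from tendsto_add[OF this s] show ?thesis by simp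
qed

lemma linearization_approx_tendsto:
  assumes \<phi>: "\<phi> \<in> free_space"
  shows "(\<lambda>k. \<Sum>x\<in>fst (approx \<phi> k). snd (approx \<phi> k) x *\<^sub>R f x) \<longlonglongrightarrow> linearization f \<phi>"
  by (rule linearization_tendsto[OF \<phi> approx_spec(1)[OF \<phi>] approx_tendsto[OF nontrivial \<phi>]])

lemma linearization_delta: "linearization f (delta x) = f x"
proof -
  have "dual_norm (\<lambda>g. delta x g - delta_sum {x} (\<lambda>_. 1) g) = 0"
    using dual_norm_zero[OF nontrivial] by (simp add: delta_eq_delta_sum)
  then have "(\<lambda>k. f x) \<longlonglongrightarrow> linearization f (delta x)"
    using linearization_tendsto[OF delta_in_free_space[OF nontrivial], where F="\<lambda>_. {x}" and c="\<lambda>_ _. 1"] by simp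
  then show ?thesis using LIMSEQ_unique tendsto_const by metis
qed

lemma linearization_lincomb:
  assumes \<phi>: "\<phi> \<in> free_space" and \<psi>: "\<psi> \<in> free_space"
  shows "linearization f (\<lambda>g. a * \<phi> g + b * \<psi> g) = a *\<^sub>R linearization f \<phi> + b *\<^sub>R linearization f \<psi>"
proof -
  define A where "A k = fst (approx \<phi> k)" for k
  define c where "c k = snd (approx \<phi> k)" for k
  define B where "B k = fst (approx \<psi> k)" for k
  define d where "d k = snd (approx \<psi> k)" for k
  have A: "finite (A k)" and B: "finite (B k)" for k
    using approx_spec(1)[OF \<phi>] approx_spec(1)[OF \<psi>] by (simp_all add: A_def B_def)
  define e where "e k = (\<lambda>x. a * zero_outside (A k) (c k) x + b * zero_outside (B k) (d k) x)" for k
  have eq: "(\<lambda>g. a * \<phi> g + b * \<psi> g - delta_sum (A k \<union> B k) (e k) g)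
      = (\<lambda>g. a * (\<phi> g - delta_sum (A k) (c k) g) + b * (\<psi> g - delta_sum (B k) (d k) g))" for k
    using delta_sum_lincomb[OF A[of k] B[of k], of a "c k" _ b "d k"] by (auto simp: e_def algebra_simps)
  have "(\<lambda>k. dual_norm (\<lambda>g. a * \<phi> g + b * \<psi> g - delta_sum (A k \<union> B k) (e k) g)) \<longlonglongrightarrow> 0"
  proof (rule tendsto_sandwich[OF _ _ tendsto_const])
    show "\<forall>\<^sub>F k in sequentially. 0 \<le> dual_norm (\<lambda>g. a * \<phi> g + b * \<psi> g - delta_sum (A k \<union> B k) (e k) g)"
      using free_space_Lip0_dual[OF free_space_lincomb[OF nontrivial \<phi> \<psi>]] A B
      by (intro always_eventually allI dual_norm_nonneg[OF nontrivial] Lip0_dual_diff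
          delta_sum_in_Lip0_dual) simp_all
    show "\<forall>\<^sub>F k in sequentially. dual_norm (\<lambda>g. a * \<phi> g + b * \<psi> g - delta_sum (A k \<union> B k) (e k) g)
        \<le> \<bar>a\<bar> * dual_norm (\<lambda>g. \<phi> g - delta_sum (A k) (c k) g)
          + \<bar>b\<bar> * dual_norm (\<lambda>g. \<psi> g - delta_sum (B k) (d k) g)"
      unfolding eq using free_space_Lip0_dual[OF \<phi>] free_space_Lip0_dual[OF \<psi>] A B
      by (intro always_eventually allI dual_norm_lincomb_le[OF nontrivial] Lip0_dual_diff
          delta_sum_in_Lip0_dual)
    show "(\<lambda>k. \<bar>a\<bar> * dual_norm (\<lambda>g. \<phi> g - delta_sum (A k) (c k) g)
        + \<bar>b\<bar> * dual_norm (\<lambda>g. \<psi> g - delta_sum (B k) (d k) g)) \<longlonglongrightarrow> 0"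
      using tendsto_add[OF tendsto_mult[OF tendsto_const approx_tendsto[OF nontrivial \<phi>]]
          tendsto_mult[OF tendsto_const approx_tendsto[OF nontrivial \<psi>]], of "\<bar>a\<bar>" "\<bar>b\<bar>"]
      by (simp add: A_def B_def c_def d_def)
  qed
  then have "(\<lambda>k. \<Sum>x\<in>A k \<union> B k. e k x *\<^sub>R f x) \<longlonglongrightarrow> linearization f (\<lambda>g. a * \<phi> g + b * \<psi> g)"
    using A B by (intro linearization_tendsto free_space_lincomb[OF nontrivial \<phi> \<psi>]) simp_all
  moreover have "(\<lambda>k. a *\<^sub>R (\<Sum>x\<in>A k. c k x *\<^sub>R f x) + b *\<^sub>R (\<Sum>x\<in>B k. d k x *\<^sub>R f x))
      \<longlonglongrightarrow> a *\<^sub>R linearization f \<phi> + b *\<^sub>R linearization f \<psi>"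
    unfolding A_def B_def c_def d_def
    by (intro tendsto_add tendsto_scaleR tendsto_const linearization_approx_tendsto \<phi> \<psi>)
  then have "(\<lambda>k. \<Sum>x\<in>A k \<union> B k. e k x *\<^sub>R f x) \<longlonglongrightarrow> a *\<^sub>R linearization f \<phi> + b *\<^sub>R linearization f \<psi>"
    by (simp add: e_def sum_scaleR_lincomb[OF A B])
  ultimately show ?thesis by (rule LIMSEQ_unique)
qed

lemma norm_linearization_le:
  assumes \<phi>: "\<phi> \<in> free_space"
  shows "norm (linearization f \<phi>) \<le> lip_norm f * dual_norm \<phi>"
proof -
  have \<phi>': "\<phi> \<in> Lip0_dual" by (rule free_space_Lip0_dual[OF \<phi>])
  have "norm (\<Sum>x\<in>fst (approx \<phi> k). snd (approx \<phi> k) x *\<^sub>R f x)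
      \<le> lip_norm f * (dual_norm \<phi> + inverse (real (Suc k)))" for k
  proof -
    let ?F = "fst (approx \<phi> k)" and ?c = "snd (approx \<phi> k)"
    have F: "finite ?F" by (rule approx_spec(1)[OF \<phi>])
    have "norm (\<Sum>x\<in>?F. ?c x *\<^sub>R f x) \<le> lip_norm f * dual_norm (delta_sum ?F ?c)"
      by (rule norm_sum_le_lip_norm_mult_dual_norm[OF nontrivial Lip0 F])
    also have "\<dots> \<le> lip_norm f * (dual_norm \<phi> + inverse (real (Suc k)))"
      using dual_norm_triangle_sub[OF nontrivial \<phi>' delta_sum_in_Lip0_dual[OF F, of ?c]] approx_spec(2)[OF \<phi>, of k]
        lip_norm_nonneg[OF nontrivial Lip0]
      by (intro mult_left_mono) auto
    finally show ?thesis .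
  qed
  moreover have "(\<lambda>k. lip_norm f * (dual_norm \<phi> + inverse (real (Suc k)))) \<longlonglongrightarrow> lip_norm f * (dual_norm \<phi> + 0)"
    by (intro tendsto_intros LIMSEQ_inverse_real_of_nat)
  ultimately have "norm (linearization f \<phi>) \<le> lip_norm f * (dual_norm \<phi> + 0)"
    by (intro LIMSEQ_le[OF tendsto_norm[OF linearization_approx_tendsto[OF \<phi>]]]) auto
  then show ?thesis by simp
qed

lemma linearization_bounded_ops: "linearization f \<in> bounded_ops"
proof -
  have "linearization f (\<lambda>g. \<phi> g + \<psi> g) = linearization f \<phi> + linearization f \<psi>"
    if "\<phi> \<in> free_space" "\<psi> \<in> free_space" for \<phi> \<psi>
    using linearization_lincomb[OF that, of 1 1] by simp
  moreover have "linearization f (\<lambda>g. c * \<phi> g) = c *\<^sub>R linearization f \<phi>"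
    if "\<phi> \<in> free_space" for c \<phi>
    using linearization_lincomb[OF that that, of c 0] by simp
  ultimately show ?thesis
    unfolding bounded_ops_def using norm_linearization_le by blast
qed

end

section \<open>Finite dimension and uniform convexity\<close>

lemma closed_if_bounded_sequences_subconverge:
  fixes S :: "'a::real_normed_vector set"
  assumes "\<And>u :: nat \<Rightarrow> 'a. (\<forall>n. u n \<in> S) \<Longrightarrow> bounded (range u) \<Longrightarrow> \<exists>r l. strict_mono r \<and> l \<in> S \<and> (u \<circ> r) \<longlonglongrightarrow> l"
  shows "closed S"
  unfolding closed_sequential_limits
proof (intro allI impI, elim conjE)
  fix u :: "nat \<Rightarrow> 'a" and l assume u: "\<forall>n. u n \<in> S" "u \<longlonglongrightarrow> l"
  obtain r l' where r: "strict_mono r" "l' \<in> S" "(u \<circ> r) \<longlonglongrightarrow> l'"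
    using assms[OF u(1) convergent_imp_bounded[OF u(2)]] by blast
  have "l = l'" using LIMSEQ_subseq_LIMSEQ[OF u(2) r(1)] r(3) by (rule LIMSEQ_unique)
  then show "l \<in> S" using r(2) by simp
qed

lemma abs_mult_infdist_le_norm:
  fixes b :: "'a::real_normed_vector"
  assumes "y \<in> span B"
  shows "\<bar>t\<bar> * infdist b (span B) \<le> norm (y + t *\<^sub>R b)"
proof (cases "t = 0")
  case False
  have "- ((1 / t) *\<^sub>R y) \<in> span B" using assms by (simp add: span_scale span_neg)
  then have "infdist b (span B) \<le> dist b (- ((1 / t) *\<^sub>R y))" by (rule infdist_le)
  also have "\<dots> = norm ((1 / t) *\<^sub>R (y + t *\<^sub>R b))"
    using False by (simp add: dist_norm scaleR_add_right norm_minus_commute add.commute)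
  also have "\<dots> = norm (y + t *\<^sub>R b) / \<bar>t\<bar>" by simp
  finally show ?thesis using False by (simp add: le_divide_eq mult.commute)
qed simp

lemma bounded_sequence_span_insert_decompose:
  fixes u :: "nat \<Rightarrow> 'a::real_normed_vector"
  assumes b: "b \<notin> span B" and closed: "closed (span B)"
    and u: "\<forall>n. u n \<in> span (insert b B)" "bounded (range u)"
  obtains v t where "\<And>n. v n \<in> span B" "\<And>n. u n = v n + t n *\<^sub>R b"
    "bounded (range v)" "bounded (range t)"
proof -
  define d where "d = infdist b (span B)"
  have d: "d > 0"
    unfolding d_def using b closed span_zero by (intro infdist_pos_not_in_closed) auto
  obtain M where M: "\<forall>n. norm (u n) \<le> M" using u(2) by (auto simp: bounded_iff)
  have "\<forall>n. \<exists>t. u n - t *\<^sub>R b \<in> span B" using u(1) by (auto simp: span_insert)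
  then obtain t where t: "\<And>n. u n - t n *\<^sub>R b \<in> span B" by metis
  have t_le: "\<bar>t n\<bar> \<le> M / d" for n
  proof -
    have "\<bar>t n\<bar> * d \<le> norm (u n)"
      using abs_mult_infdist_le_norm[OF t[of n], of "t n" b] by (simp add: d_def)
    then show ?thesis using M d order_trans by (simp add: le_divide_eq) blast
  qed
  have "norm (u n - t n *\<^sub>R b) \<le> M + M / d * norm b" for n
  proof -
    have "norm (u n - t n *\<^sub>R b) \<le> norm (u n) + \<bar>t n\<bar> * norm b"
      using norm_triangle_ineq4[of "u n" "t n *\<^sub>R b"] by simp
    also have "\<dots> \<le> M + M / d * norm b"
      using M t_le[of n] by (intro add_mono mult_right_mono) auto
    finally show ?thesis .
  qed
  then have "bounded (range (\<lambda>n. u n - t n *\<^sub>R b))"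
    by (auto simp: bounded_iff intro!: exI[of _ "M + M / d * norm b"])
  moreover have "bounded (range t)" using t_le by (auto simp: bounded_iff intro!: exI[of _ "M / d"])
  ultimately show thesis using that[of "\<lambda>n. u n - t n *\<^sub>R b" t] t by simp
qed

lemma span_finite_bounded_sequence_subconverges:
  fixes B :: "'a::real_normed_vector set" and u :: "nat \<Rightarrow> 'a"
  assumes "finite B" "\<forall>n. u n \<in> span B" "bounded (range u)"
  shows "\<exists>r l. strict_mono r \<and> l \<in> span B \<and> (u \<circ> r) \<longlonglongrightarrow> l"
  using assms
proof (induction B arbitrary: u rule: finite_induct)
  case empty
  then have "u \<circ> id = (\<lambda>n. 0)" by auto
  then show ?case by (intro exI[of _ id] exI[of _ 0]) (auto simp: strict_mono_def)
next
  case (insert b B)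
  show ?case
  proof (cases "b \<in> span B")
    case True
    then show ?thesis using insert span_redundant[OF True] by simp
  next
    case False
    have "closed (span B)"
      using insert.IH by (rule closed_if_bounded_sequences_subconverge)
    then obtain v t where v: "\<And>n. v n \<in> span B" and u_eq: "\<And>n. u n = v n + t n *\<^sub>R b"
      and bounded: "bounded (range v)" "bounded (range t)"
      using bounded_sequence_span_insert_decompose[OF False _ insert.prems] by blast
    obtain r1 t0 where r1: "strict_mono r1" "(t \<circ> r1) \<longlonglongrightarrow> t0"
      using bounded_imp_convergent_subsequence[OF bounded(2)] by blast
    have "bounded (range (v \<circ> r1))" using bounded(1) by (auto simp: bounded_iff)
    moreover have "\<forall>n. (v \<circ> r1) n \<in> span B" using v by simp
    ultimately obtain r2 l where r2: "strict_mono r2" "l \<in> span B" "(v \<circ> r1 \<circ> r2) \<longlonglongrightarrow> l"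
      using insert.IH by blast
    have "(\<lambda>n. (v \<circ> r1 \<circ> r2) n + (t \<circ> r1 \<circ> r2) n *\<^sub>R b) \<longlonglongrightarrow> l + t0 *\<^sub>R b"
      by (intro tendsto_intros r2(3) LIMSEQ_subseq_LIMSEQ[OF r1(2) r2(1)])
    moreover have "(\<lambda>n. (v \<circ> r1 \<circ> r2) n + (t \<circ> r1 \<circ> r2) n *\<^sub>R b) = u \<circ> (r1 \<circ> r2)"
      by (auto simp: u_eq)
    moreover have "l + t0 *\<^sub>R b \<in> span (insert b B)"
      using r2(2) by (meson insertI1 span_add span_base span_mono span_scale subsetD subset_insertI)
    ultimately show ?thesis using strict_mono_o[OF r1(1) r2(1)] by metis
  qed
qed

lemma unit_sequence_subconverges:
  fixes u :: "nat \<Rightarrow> 'a::real_normed_vector" and B :: "'a set"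
  assumes B: "finite B" "span B = UNIV" and u: "\<And>n. norm (u n) = 1"
  obtains r l where "strict_mono r" "norm l = 1" "(u \<circ> r) \<longlonglongrightarrow> l"
proof -
  have "bounded (range u)" using u by (auto simp: bounded_iff)
  then obtain r l where r: "strict_mono r" "(u \<circ> r) \<longlonglongrightarrow> l"
    using span_finite_bounded_sequence_subconverges[OF B(1)] B(2) by blast
  have "(\<lambda>n. norm ((u \<circ> r) n)) \<longlonglongrightarrow> norm l" by (intro tendsto_intros r(2))
  then have "norm l = 1" using u by (simp add: LIMSEQ_const_iff)
  then show thesis using that r by blast
qed

lemma uniformly_convex_unit_ball:
  fixes \<epsilon> :: real
  assumes uc: "uniformly_convex TYPE('b::real_normed_vector)" and \<epsilon>: "\<epsilon> > 0"
  obtains \<delta> where "\<delta> > 0"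
    "\<And>x y::'b. norm x \<le> 1 \<Longrightarrow> norm y = 1 \<Longrightarrow> 2 - \<delta> \<le> norm (x + y) \<Longrightarrow> norm (x - y) < \<epsilon>"
proof -
  obtain \<delta>0 where \<delta>0: "\<delta>0 > 0"
    and convex: "\<And>x y::'b. norm x = 1 \<Longrightarrow> norm y = 1 \<Longrightarrow> \<epsilon> / 2 \<le> norm (x - y) \<Longrightarrow>
      norm ((1/2) *\<^sub>R (x + y)) \<le> 1 - \<delta>0"
    using uc \<epsilon> unfolding uniformly_convex_def by (meson half_gt_zero)
  define \<delta> where "\<delta> = min (\<delta>0 / 2) (min (\<epsilon> / 2) (1 / 2))"
  have \<delta>: "\<delta> > 0" "\<delta> < \<delta>0" "\<delta> \<le> \<epsilon> / 2" "\<delta> < 1" using \<delta>0 \<epsilon> by (auto simp: \<delta>_def)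
  have "norm (x - y) < \<epsilon>"
    if x: "norm x \<le> 1" and y: "norm y = 1" and xy: "2 - \<delta> \<le> norm (x + y)" for x y :: 'b
  proof -
    have r: "1 - \<delta> \<le> norm x" using xy y norm_triangle_ineq[of x y] by linarith
    then have r0: "norm x > 0" using \<delta>(4) by linarith
    define x' where "x' = (1 / norm x) *\<^sub>R x"
    have x': "norm x' = 1" using r0 by (simp add: x'_def)
    have "1 / norm x \<ge> 1" using r0 x by (simp add: le_divide_eq)
    moreover have "x' - x = (1 / norm x - 1) *\<^sub>R x" by (simp add: x'_def algebra_simps)
    ultimately have "norm (x' - x) = (1 / norm x - 1) * norm x" by simp
    also have "\<dots> = 1 - norm x" using r0 by (simp add: left_diff_distrib)
    finally have "norm (x' - x) = 1 - norm x" .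
    then have xx': "norm (x' - x) \<le> \<delta>" using r by linarith
    have "norm (x + y) \<le> norm (x' + y) + norm (x' - x)"
      using norm_triangle_ineq4[of "x' + y" "x' - x"] by (simp add: algebra_simps)
    then have "2 - 2 * \<delta> \<le> norm (x' + y)" using xy xx' by linarith
    then have "norm (x' - y) < \<epsilon> / 2"
      using convex[OF x' y] \<delta>(2) by fastforce
    moreover have "norm (x - y) \<le> norm (x - x') + norm (x' - y)"
      using norm_triangle_ineq[of "x - x'" "x' - y"] by simp
    ultimately show ?thesis using xx' \<delta>(3) by (simp add: norm_minus_commute)
  qed
  then show thesis using that \<delta>(1) by blast
qed

lemma uniformly_convex_tendsto:
  fixes q :: "nat \<Rightarrow> 'b::real_normed_vector"
  assumes uc: "uniformly_convex TYPE('b)" and w: "norm w = M" "M > 0"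
    and q: "\<And>n. norm (q n) \<le> M" and lim: "(\<lambda>n. norm (q n + w)) \<longlonglongrightarrow> 2 * M"
  shows "q \<longlonglongrightarrow> w"
proof (rule tendstoI)
  fix \<epsilon> :: real assume "\<epsilon> > 0"
  then obtain \<delta> where \<delta>: "\<delta> > 0"
    and close: "\<And>x y::'b. norm x \<le> 1 \<Longrightarrow> norm y = 1 \<Longrightarrow> 2 - \<delta> \<le> norm (x + y) \<Longrightarrow> norm (x - y) < \<epsilon> / M"
    using uniformly_convex_unit_ball[OF uc, of "\<epsilon> / M"] w(2) by auto
  have "\<forall>\<^sub>F n in sequentially. dist (norm (q n + w)) (2 * M) < M * \<delta>"
    using tendstoD[OF lim] \<delta> w(2) by simp
  then show "\<forall>\<^sub>F n in sequentially. dist (q n) w < \<epsilon>"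
  proof eventually_elim
    case (elim n)
    have "(2 - \<delta>) * M \<le> norm (q n + w)"
      using elim by (simp add: dist_real_def abs_less_iff algebra_simps)
    then have "2 - \<delta> \<le> norm (q n + w) / M" using w(2) by (simp add: le_divide_eq)
    also have "norm (q n + w) / M = norm ((1 / M) *\<^sub>R q n + (1 / M) *\<^sub>R w)"
      using w(2) by (simp add: scaleR_add_right[symmetric])
    finally have "2 - \<delta> \<le> norm ((1 / M) *\<^sub>R q n + (1 / M) *\<^sub>R w)" .
    moreover have "norm ((1 / M) *\<^sub>R q n) \<le> 1" "norm ((1 / M) *\<^sub>R w) = 1"
      using q[of n] w by (simp_all add: divide_le_eq_1)
    ultimately have "norm ((1 / M) *\<^sub>R q n - (1 / M) *\<^sub>R w) < \<epsilon> / M"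
      by (intro close)
    moreover have "norm ((1 / M) *\<^sub>R q n - (1 / M) *\<^sub>R w) = norm (q n - w) / M"
      using w(2) by (simp add: scaleR_diff_right[symmetric])
    ultimately show ?case
      using w(2) by (simp add: dist_norm divide_less_cancel)
  qed
qed

section \<open>Norm-attaining operators and DA\<close>

lemma functional_delta_sum_le:
  fixes T :: "'a::real_normed_vector functional \<Rightarrow> 'b::real_normed_vector" and \<xi> :: "'b \<Rightarrow> real"
  assumes nontrivial: "\<exists>x::'a. x \<noteq> 0" and T: "T \<in> bounded_ops" and F: "finite F"
    and \<xi>: "linear \<xi>" and L: "L \<ge> 0"
    and lip: "\<And>x y. x \<in> insert 0 F \<Longrightarrow> y \<in> insert 0 F \<Longrightarrow>
      \<xi> (T (delta x)) - \<xi> (T (delta y)) \<le> L * norm (x - y)"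
  shows "\<xi> (T (delta_sum F c)) \<le> dual_norm (delta_sum F c) * L"
proof -
  have "\<bar>\<xi> (T (delta x)) - \<xi> (T (delta y))\<bar> \<le> L * norm (x - y)"
    if "x \<in> insert 0 F" "y \<in> insert 0 F" for x y
    using lip[OF that] lip[OF that(2,1)] by (simp add: norm_minus_commute abs_le_iff)
  then have "(\<Sum>x\<in>F. c x * \<xi> (T (delta x))) \<le> dual_norm (delta_sum F c) * L"
    using bounded_ops_delta_zero[OF nontrivial T] \<xi> L
    by (intro sum_le_dual_norm_delta_sum[OF nontrivial F]) (simp_all add: linear_0)
  then show ?thesis
    using bounded_ops_delta_sum[OF nontrivial T F] \<xi> by (simp add: linear_sum linear_cmul)
qed

lemma norming_functional_quotient_le:
  fixes \<xi> :: "'b::real_normed_vector \<Rightarrow> real" and g :: "'a::real_normed_vector \<Rightarrow> 'b"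
  assumes \<xi>: "linear \<xi>" "\<xi> w = norm w" "\<And>v. v \<in> span W \<Longrightarrow> \<bar>\<xi> v\<bar> \<le> norm v"
    and W: "w \<in> W" "g x \<in> span W" "g y \<in> span W"
    and far: "norm ((1 / norm (x - y)) *\<^sub>R (g x - g y) + w) \<le> 2 * norm w - \<eta>"
  shows "\<xi> (g x) - \<xi> (g y) \<le> (norm w - \<eta>) * norm (x - y)"
proof (cases "x = y")
  case False
  define q where "q = (1 / norm (x - y)) *\<^sub>R (g x - g y)"
  have "q + w \<in> span W"
    using span_base[OF W(1)] W(2,3) unfolding q_def by (simp add: span_add span_scale span_diff)
  then have "\<xi> q + norm w \<le> norm (q + w)" using \<xi> abs_le_D1 by (fastforce simp: linear_add)
  moreover have "\<xi> q = (\<xi> (g x) - \<xi> (g y)) / norm (x - y)"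
    using \<xi>(1) by (simp add: q_def linear_cmul linear_diff diff_divide_distrib)
  ultimately have "(\<xi> (g x) - \<xi> (g y)) / norm (x - y) \<le> norm w - \<eta>"
    using far[folded q_def] by linarith
  then show ?thesis using False by (simp add: pos_divide_le_eq)
qed simp

lemma norming_functional_near:
  fixes T :: "'a::real_normed_vector functional \<Rightarrow> 'b::real_normed_vector" and \<xi> :: "'b \<Rightarrow> real"
  assumes nontrivial: "\<exists>x::'a. x \<noteq> 0" and T: "T \<in> bounded_ops"
    and K: "\<And>\<phi>. \<phi> \<in> free_space \<Longrightarrow> norm (T \<phi>) \<le> K * dual_norm \<phi>"
    and \<phi>: "\<phi> \<in> free_space" and \<psi>: "\<psi> \<in> free_space"
    and \<xi>: "linear \<xi>" "\<xi> (T \<phi>) = norm (T \<phi>)" "\<And>v. v \<in> span W \<Longrightarrow> \<bar>\<xi> v\<bar> \<le> norm v"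
    and W: "T \<phi> \<in> W" "T \<psi> \<in> span W"
  shows "norm (T \<phi>) - K * dual_norm (\<lambda>g. \<phi> g - \<psi> g) \<le> \<xi> (T \<psi>)"
proof -
  have "T \<phi> - T \<psi> \<in> span W" using W by (simp add: span_base span_diff)
  then have "\<xi> (T \<phi> - T \<psi>) \<le> norm (T \<phi> - T \<psi>)" using \<xi>(3) abs_le_D1 by blast
  also have "\<dots> = norm (T (\<lambda>g. \<phi> g - \<psi> g))" using bounded_ops_diff[OF nontrivial T \<phi> \<psi>] by simp
  also have "\<dots> \<le> K * dual_norm (\<lambda>g. \<phi> g - \<psi> g)" by (rule K[OF free_space_diff[OF nontrivial \<phi> \<psi>]])
  finally show ?thesis using \<xi>(1,2) by (simp add: linear_diff)
qed

lemma exists_quotient_near_image: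
  fixes T :: "'a::real_normed_vector functional \<Rightarrow> 'b::real_normed_vector"
  assumes nontrivial: "\<exists>x::'a. x \<noteq> 0" and T: "T \<in> bounded_ops"
    and \<phi>: "\<phi> \<in> free_space" "dual_norm \<phi> = 1" and nonzero: "T \<phi> \<noteq> 0" and \<eta>: "\<eta> > 0"
  shows "\<exists>x y. x \<noteq> y \<and>
    2 * norm (T \<phi>) - \<eta> \<le> norm ((1 / norm (x - y)) *\<^sub>R (T (delta x) - T (delta y)) + T \<phi>)"
proof (rule ccontr)
  \<comment> \<open>Otherwise the norming functional of \<open>T \<phi>\<close> is \<open>(\<parallel>T \<phi>\<parallel> - \<eta>)\<close>-Lipschitz along the deltas,
    which McShane's extension turns into a bound on \<open>\<xi> (T \<psi>)\<close> for \<open>\<psi>\<close> close to \<open>\<phi>\<close>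
    that is incompatible with \<open>\<xi> (T \<phi>) = \<parallel>T \<phi>\<parallel>\<close>.\<close>
  define w where "w = T \<phi>"
  define M where "M = norm w"
  assume "\<not> ?thesis"
  then have far: "norm ((1 / norm (x - y)) *\<^sub>R (T (delta x) - T (delta y)) + w) < 2 * M - \<eta>"
    if "x \<noteq> y" for x y
    using that by (auto simp: w_def M_def not_le)
  define \<eta>' where "\<eta>' = min \<eta> M"
  have \<eta>': "\<eta>' > 0" "\<eta>' \<le> M" "\<eta>' \<le> \<eta>" using \<eta> nonzero by (auto simp: \<eta>'_def M_def w_def)
  obtain K where K: "K \<ge> 0" "\<And>\<phi>. \<phi> \<in> free_space \<Longrightarrow> norm (T \<phi>) \<le> K * dual_norm \<phi>"
    using bounded_ops_bound[OF nontrivial T] by blast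
  have "0 < K + M + 1" using K(1) norm_ge_zero[of w] unfolding M_def by linarith
  then have "\<exists>\<delta>>0. \<delta> * (K + M) < \<eta>'"
    by (intro exI[of _ "\<eta>' / (K + M + 1)"]) (use \<eta>'(1) in \<open>simp add: field_simps\<close>)
  then obtain \<delta> where \<delta>: "\<delta> > 0" "\<delta> * (K + M) < \<eta>'" by blast
  obtain F c where F: "finite F" and approx: "dual_norm (\<lambda>g. \<phi> g - delta_sum F c g) < \<delta>"
    using free_space_approx[OF \<phi>(1) \<delta>(1)] .
  let ?\<psi> = "delta_sum F c"
  have \<psi>: "?\<psi> \<in> free_space" by (rule delta_sum_in_free_space[OF nontrivial F])
  define W where "W = insert w ((\<lambda>x. T (delta x)) ` F)"
  obtain \<xi> where \<xi>: "linear \<xi>" "\<xi> w = norm w" "\<And>v. v \<in> span W \<Longrightarrow> \<bar>\<xi> v\<bar> \<le> norm v"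
    unfolding W_def using norming_functional_on_span[OF finite_imageI[OF F]] by blast
  have in_W: "T (delta x) \<in> span W" if "x \<in> insert 0 F" for x
    unfolding W_def
    using in_span_insert_image[of "\<lambda>x. T (delta x)", OF bounded_ops_delta_zero[OF nontrivial T] that] .
  have "\<xi> (T (delta x)) - \<xi> (T (delta y)) \<le> (M - \<eta>') * norm (x - y)"
    if "x \<in> insert 0 F" "y \<in> insert 0 F" for x y
    using norming_functional_quotient_le[OF \<xi>, where g="\<lambda>x. T (delta x)" and x=x and y=y and \<eta>=\<eta>'] in_W[OF that(1)] in_W[OF that(2)]
      far[of x y] \<eta>' by (cases "x = y") (simp_all add: W_def M_def)
  then have "\<xi> (T ?\<psi>) \<le> dual_norm ?\<psi> * (M - \<eta>')"
    using \<eta>'(2) by (intro functional_delta_sum_le[OF nontrivial T F \<xi>(1)]) simp_all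
  also have "\<dots> \<le> (1 + \<delta>) * (M - \<eta>')"
    using dual_norm_triangle_sub[OF nontrivial free_space_Lip0_dual[OF \<phi>(1)] delta_sum_in_Lip0_dual[OF F, of c]]
      approx \<phi>(2) \<eta>'(2) by (intro mult_right_mono) simp_all
  finally have upper: "\<xi> (T ?\<psi>) \<le> (1 + \<delta>) * (M - \<eta>')" .
  have "T ?\<psi> \<in> span W"
    unfolding bounded_ops_delta_sum[OF nontrivial T F] W_def
    by (intro span_sum span_scale) (auto intro: span_base)
  then have "M - K * dual_norm (\<lambda>g. \<phi> g - ?\<psi> g) \<le> \<xi> (T ?\<psi>)"
    using norming_functional_near[OF nontrivial T K(2) \<phi>(1) \<psi>, of \<xi> W] \<xi>
    by (simp add: W_def M_def w_def)
  moreover have "K * dual_norm (\<lambda>g. \<phi> g - ?\<psi> g) \<le> K * \<delta>"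
    using approx K(1) by (intro mult_left_mono) auto
  ultimately have "M - K * \<delta> \<le> (1 + \<delta>) * (M - \<eta>')" using upper by linarith
  then have "\<eta>' + \<delta> * \<eta>' \<le> \<delta> * (K + M)" by (simp add: algebra_simps)
  then show False using \<delta> \<eta>'(1) mult_pos_pos[of \<delta> \<eta>'] by linarith
qed

lemma DAI:
  assumes "f \<in> Lip0" "norm u = 1" "norm z = lip_norm f"
    and "(\<lambda>n. (1 / norm (xs n - ys n)) *\<^sub>R (f (xs n) - f (ys n))) \<longlonglongrightarrow> z"
    and "(\<lambda>n. (1 / norm (xs n - ys n)) *\<^sub>R (xs n - ys n)) \<longlonglongrightarrow> u"
    and "\<forall>n. xs n \<noteq> ys n"
  shows "f \<in> DA"
  unfolding DA_def using assms by blast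

lemma DA_if_quotients_tendsto:
  fixes g :: "'a::real_normed_vector \<Rightarrow> 'b::real_normed_vector" and B :: "'a set"
  assumes B: "finite B" "span B = UNIV" and g: "g \<in> Lip0" and xy: "\<And>n. xs n \<noteq> ys n"
    and lim: "(\<lambda>n. (1 / norm (xs n - ys n)) *\<^sub>R (g (xs n) - g (ys n))) \<longlonglongrightarrow> z"
    and z: "norm z = lip_norm g"
  shows "g \<in> DA"
proof -
  define u where "u n = (1 / norm (xs n - ys n)) *\<^sub>R (xs n - ys n)" for n
  have "norm (u n) = 1" for n using xy[of n] by (simp add: u_def)
  then obtain r u0 where r: "strict_mono r" "norm u0 = 1" "(u \<circ> r) \<longlonglongrightarrow> u0"
    using unit_sequence_subconverges[OF B] by blast
  have "(\<lambda>n. (1 / norm (xs (r n) - ys (r n))) *\<^sub>R (g (xs (r n)) - g (ys (r n)))) \<longlonglongrightarrow> z"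
    using LIMSEQ_subseq_LIMSEQ[OF lim r(1)] by (simp add: o_def)
  moreover have "(\<lambda>n. (1 / norm (xs (r n) - ys (r n))) *\<^sub>R (xs (r n) - ys (r n))) \<longlonglongrightarrow> u0"
    using r(3) by (simp add: u_def o_def)
  ultimately show ?thesis
    by (rule DAI[OF g r(2) z, where xs="\<lambda>n. xs (r n)" and ys="\<lambda>n. ys (r n)"]) (simp add: xy)
qed

lemma quotients_tendsto_norm_attained_value:
  fixes S :: "'a::real_normed_vector functional \<Rightarrow> 'b::real_normed_vector"
  assumes nontrivial: "\<exists>x::'a. x \<noteq> 0" and uc: "uniformly_convex TYPE('b)"
    and S: "S \<in> bounded_ops" and \<phi>: "\<phi> \<in> free_space" "dual_norm \<phi> = 1"
    and attained: "norm (S \<phi>) = op_norm S" and nonzero: "S \<phi> \<noteq> 0"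
  obtains xs ys where "\<And>n. xs n \<noteq> ys n"
    "(\<lambda>n. (1 / norm (xs n - ys n)) *\<^sub>R (S (delta (xs n)) - S (delta (ys n)))) \<longlonglongrightarrow> S \<phi>"
proof -
  define M where "M = norm (S \<phi>)"
  have "\<exists>x y. x \<noteq> y \<and> 2 * M - inverse (real (Suc n))
      \<le> norm ((1 / norm (x - y)) *\<^sub>R (S (delta x) - S (delta y)) + S \<phi>)" for n
    unfolding M_def
    by (rule exists_quotient_near_image[where T=S and \<phi>=\<phi>, OF nontrivial S \<phi> nonzero]) simp
  then obtain xs ys where xy: "\<And>n. xs n \<noteq> ys n"
    and near: "\<And>n. 2 * M - inverse (real (Suc n))
      \<le> norm ((1 / norm (xs n - ys n)) *\<^sub>R (S (delta (xs n)) - S (delta (ys n))) + S \<phi>)"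
    by metis
  define q where "q n = (1 / norm (xs n - ys n)) *\<^sub>R (S (delta (xs n)) - S (delta (ys n)))" for n
  have q_le: "norm (q n) \<le> M" for n
    using norm_delta_diff_le_op_norm[OF nontrivial S, of "xs n" "ys n"] xy[of n] attained
    by (simp add: q_def M_def pos_divide_le_eq)
  have "(\<lambda>n. norm (q n + S \<phi>)) \<longlonglongrightarrow> 2 * M"
  proof (rule tendsto_sandwich[OF _ _ _ tendsto_const])
    show "\<forall>\<^sub>F n in sequentially. 2 * M - inverse (real (Suc n)) \<le> norm (q n + S \<phi>)"
      using near by (simp add: q_def)
    have "norm (q n + S \<phi>) \<le> 2 * M" for n
      using norm_triangle_ineq[of "q n" "S \<phi>"] q_le[of n] by (simp add: M_def)
    then show "\<forall>\<^sub>F n in sequentially. norm (q n + S \<phi>) \<le> 2 * M" by simp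
    show "(\<lambda>n. 2 * M - inverse (real (Suc n))) \<longlonglongrightarrow> 2 * M"
      using tendsto_diff[OF tendsto_const LIMSEQ_inverse_real_of_nat, of "2 * M"] by simp
  qed
  then have "q \<longlonglongrightarrow> S \<phi>"
    using nonzero q_le by (intro uniformly_convex_tendsto[OF uc]) (simp_all add: M_def)
  then have "(\<lambda>n. (1 / norm (xs n - ys n)) *\<^sub>R (S (delta (xs n)) - S (delta (ys n)))) \<longlonglongrightarrow> S \<phi>"
    by (simp add: q_def[abs_def])
  with xy show thesis by (rule that)
qed

lemma norm_attaining_delta_comp_DA:
  fixes S :: "'a::real_normed_vector functional \<Rightarrow> 'b::real_normed_vector" and B :: "'a set"
  assumes nontrivial: "\<exists>x::'a. x \<noteq> 0" and B: "finite B" "span B = UNIV"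
    and uc: "uniformly_convex TYPE('b)"
    and S: "S \<in> bounded_ops" and \<phi>: "\<phi> \<in> free_space" "dual_norm \<phi> = 1"
    and attained: "norm (S \<phi>) = op_norm S"
  shows "(\<lambda>x. S (delta x)) \<in> DA"
proof -
  let ?g = "\<lambda>x. S (delta x)"
  have g: "?g \<in> Lip0" "lip_norm ?g \<le> op_norm S" using delta_comp_Lip0[OF nontrivial S] by blast+
  show ?thesis
  proof (cases "S \<phi> = 0")
    case True
    then have "lip_norm ?g = 0" using g lip_norm_nonneg[OF nontrivial g(1)] attained by simp
    moreover obtain x0 :: 'a where "x0 \<noteq> 0" using nontrivial by blast
    moreover have "?g x0 = 0" "?g 0 = 0"
      using Lip0_norm_le[OF g(1), of x0] Lip0_zero_at[OF g(1)] \<open>lip_norm ?g = 0\<close> by simp_all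
    ultimately show ?thesis
      by (intro DA_if_quotients_tendsto[OF B g(1), where xs="\<lambda>_. x0" and ys="\<lambda>_. 0" and z=0]) simp_all
  next
    case False
    then obtain xs ys where xy: "\<And>n. xs n \<noteq> ys n"
      and lim: "(\<lambda>n. (1 / norm (xs n - ys n)) *\<^sub>R (?g (xs n) - ?g (ys n))) \<longlonglongrightarrow> S \<phi>"
      using quotients_tendsto_norm_attained_value[OF nontrivial uc S \<phi> attained] by blast
    have "norm ((1 / norm (xs n - ys n)) *\<^sub>R (?g (xs n) - ?g (ys n))) \<le> lip_norm ?g" for n
      using Lip0_quotient_le_lip_norm[OF g(1) xy[of n]] by simp
    then have "norm (S \<phi>) \<le> lip_norm ?g"
      using tendsto_norm[OF lim] by (intro LIMSEQ_le_const2) auto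
    then have "norm (S \<phi>) = lip_norm ?g" using g(2) attained by simp
    then show ?thesis by (rule DA_if_quotients_tendsto[OF B g(1) xy lim])
  qed
qed

theorem corollary3p10:
  assumes finite_dim: "\<exists>B::'a::banach set. finite B \<and> span B = UNIV"
    and nontrivial: "\<exists>x::'a. x \<noteq> 0"
    and unif_convex: "uniformly_convex TYPE('b::banach)"
    and NA_dense: "\<forall>T\<in>(bounded_ops :: ((('a \<Rightarrow> real) \<Rightarrow> real) \<Rightarrow> 'b) set). \<forall>\<epsilon>>0.
        \<exists>S\<in>norm_attaining. op_norm (\<lambda>\<phi>. T \<phi> - S \<phi>) < \<epsilon>"
  shows "\<forall>f\<in>(Lip0 :: ('a \<Rightarrow> 'b) set). \<forall>\<epsilon>>0. \<exists>g\<in>DA. lip_norm (\<lambda>x. f x - g x) < \<epsilon>"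
proof (intro ballI allI impI)
  fix f :: "'a \<Rightarrow> 'b" and \<epsilon> :: real
  assume f: "f \<in> Lip0" and "\<epsilon> > 0"
  interpret Lip0_map f using nontrivial f by unfold_locales
  obtain B :: "'a set" where B: "finite B" "span B = UNIV" using finite_dim by blast
  obtain S where "S \<in> norm_attaining" and close: "op_norm (\<lambda>\<phi>. linearization f \<phi> - S \<phi>) < \<epsilon>"
    using NA_dense linearization_bounded_ops \<open>\<epsilon> > 0\<close> by blast
  then obtain \<phi> where S: "S \<in> bounded_ops" and \<phi>: "\<phi> \<in> free_space" "dual_norm \<phi> = 1"
    and attained: "norm (S \<phi>) = op_norm S"
    by (auto simp: norm_attaining_def)
  have "(\<lambda>x. S (delta x)) \<in> DA"
    by (rule norm_attaining_delta_comp_DA[OF nontrivial B unif_convex S \<phi> attained])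
  moreover have "lip_norm (\<lambda>x. f x - S (delta x)) \<le> op_norm (\<lambda>\<phi>. linearization f \<phi> - S \<phi>)"
    using delta_comp_Lip0(2)[OF nontrivial bounded_ops_minus[OF linearization_bounded_ops S]]
    by (simp add: linearization_delta)
  ultimately show "\<exists>g\<in>DA. lip_norm (\<lambda>x. f x - g x) < \<epsilon>" using close by force
qed

end
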